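(* Fix an architecture $(\mathbf d,\mathbf k,\mathbf s)$ of depth $N$, training data $X=(x_1,\dots,x_m)\in\mathbb{R}^{d_0\times m}$, $Y=(y_1,\dots,y_m)\in\mathbb{R}^{d_N\times m}$ and a differentiable loss $\ell:\mathbb{R}^{d_N}\times\mathbb{R}^{d_N}\to\mathbb{R}$, and let $\mathcal{L}(\vec w)=\sum_{i=1}^m\ell(\Pi(\vec w)x_i,y_i)$ on $\mathbb{R}^{\bar k}$, $\bar k=\sum_{i=1}^N k_i$. Suppose that $\mathcal{L}$ is twice continuously differentiable and satisfies the Łojasiewicz gradient inequality at every point of $\mathbb{R}^{\bar k}$. For a given $\vec w_0\in\mathbb{R}^{\bar k}$ consider the gradient system \[ \frac{d\vec w(t)}{dt}=-\nabla\mathcal{L}(\vec w(t)),\qquad \vec w(0)=\vec w_0. \] Then: (1) There exists a maximal open interval $I$ with $0\in I$ and a unique integral curve $\vec w:I\to\mathbb{R}^{\bar k}$ solving this system. (2) With $I$ as in (1), suppose there exists a non-decreasing function $g:\mathbb{R}\to\mathbb{R}_{\ge0}$ such that $\|\pi(\vec w)\|_1\le g(\mathcal{L}(\vec w))$ for all $\vec w\in\mathbb{R}^{\bar k}$. Then $\vec w(t)$ is defined and bounded for all $t\ge0$, and $\vec w(t)$ converges to a critical point of $\mathcal{L}$ as $t\to\infty$.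
   Context: An architecture of depth $N$ is a triple $(\mathbf d,\mathbf k,\mathbf s)=((d_0,\dots,d_N),(k_1,\dots,k_N),(s_1,\dots,s_N))$ of positive integers with $d_i=\frac{d_{i-1}-k_i}{s_i}+1$ for $i=1,\dots,N$. For a filter $w\in\mathbb{R}^{k}$ and stride $s$, the convolutional matrix $\Pi_{(d',d''),k,s}(w)\in\mathbb{R}^{d''\times d'}$ (with $d''=\frac{d'-k}{s}+1$) has entries $W_{j,(j-1)s+n}=w_n$ for $j\in\{1,\dots,d''\}$, $n\in\{1,\dots,k\}$, and all other entries $0$. For $\vec w=(w^{(1)},\dots,w^{(N)})$ with $w^{(i)}\in\mathbb{R}^{k_i}$ (identified with a vector in $\mathbb{R}^{\bar k}$), set $\Pi(\vec w):=W_N W_{N-1}\cdots W_1$ with $W_i=\Pi_{(d_{i-1},d_i),k_i,s_i}(w^{(i)})$. The matrix $\Pi(\vec w)$ is again a convolutional matrix with stride $s_v=\prod_{i=1}^N s_i$ and filter width $k_v=k_1+\sum_{i=2}^N(k_i-1)\prod_{m=1}^{i-1}s_m$; its filter $v\in\mathbb{R}^{k_v}$ is denoted $\pi(\vec w)$ (the "final filter"). Equivalently, $\sum_{j=0}^{k_v-1}v_{j+1}x^j=\prod_{i=1}^N\sum_{j=0}^{k_i-1}w^{(i)}_{j+1}x^{j\prod_{n=1}^{i-1}s_n}$. $\|\cdot\|_1$ is the $\ell_1$-norm on $\mathbb{R}^{k_v}$. A differentiable $\phi:\mathbb{R}^n\to\mathbb{R}$ satisfies the Łojasiewicz gradient inequality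 at $x$ if there exist a neighborhood $U$ of $x$ and constants $c>0$, $\mu\in[0,1)$ with $|\phi(x)-\phi(y)|^\mu\le c\|\nabla\phi(y)\|$ for all $y\in U$. *)

theory Defs
  imports "HOL-Analysis.Analysis"
begin

definition architecture :: "nat \<Rightarrow> (nat \<Rightarrow> nat) \<Rightarrow> (nat \<Rightarrow> nat) \<Rightarrow> (nat \<Rightarrow> nat) \<Rightarrow> bool" where
  "architecture N d k s \<longleftrightarrow>
     (\<forall>i\<le>N. 0 < d i) \<and>
     (\<forall>i\<in>{1..N}. 0 < k i \<and> 0 < s i \<and>
        real (d i) = (real (d (i - 1)) - real (k i)) / real (s i) + 1)"

text \<open>Matrices as functions nat => nat => real (0-indexed rows/columns).
  Convolutional matrix with filter w (0-indexed, width k) and stride s: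
  entry (j, j*s + n) is w n for n < k (0-indexed form of W_{j,(j-1)s+n} = w_n).\<close>
definition conv_mat :: "nat \<Rightarrow> nat \<Rightarrow> (nat \<Rightarrow> real) \<Rightarrow> nat \<Rightarrow> nat \<Rightarrow> real" where
  "conv_mat k s w = (\<lambda>j c. if j * s \<le> c \<and> c < j * s + k then w (c - j * s) else 0)"

definition mat_mult :: "nat \<Rightarrow> (nat \<Rightarrow> nat \<Rightarrow> real) \<Rightarrow> (nat \<Rightarrow> nat \<Rightarrow> real) \<Rightarrow> nat \<Rightarrow> nat \<Rightarrow> real" where
  "mat_mult m A B = (\<lambda>r c. \<Sum>t<m. A r t * B t c)"

text \<open>net_mat d k s F i = W_i ... W_1 (identity for i = 0), F i = filter of layer i.\<close>
fun net_mat :: "(nat \<Rightarrow> nat) \<Rightarrow> (nat \<Rightarrow> nat) \<Rightarrow> (nat \<Rightarrow> nat) \<Rightarrow> (nat \<Rightarrow> nat \<Rightarrow> real) \<Rightarrow> nat \<Rightarrow> nat \<Rightarrow> nat \<Rightarrow> real" where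
  "net_mat d k s F 0 = (\<lambda>r c. if r = c then 1 else 0)"
| "net_mat d k s F (Suc i) =
     mat_mult (d i) (conv_mat (k (Suc i)) (s (Suc i)) (F (Suc i))) (net_mat d k s F i)"

definition kbar :: "nat \<Rightarrow> (nat \<Rightarrow> nat) \<Rightarrow> nat" where
  "kbar N k = (\<Sum>i\<in>{1..N}. k i)"

definition kv :: "nat \<Rightarrow> (nat \<Rightarrow> nat) \<Rightarrow> (nat \<Rightarrow> nat) \<Rightarrow> nat" where
  "kv N k s = k 1 + (\<Sum>i\<in>{2..N}. (k i - 1) * (\<Prod>j\<in>{1..<i}. s j))"

text \<open>Splitting a parameter vector in R^kbar (coordinates enumerated by pidx : {0..<kbar} -> 'n)
  into the filters w^(1),...,w^(N): w^(i)_n (0-indexed) is coordinate (k_1+...+k_{i-1}) + n.\<close>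
definition filters_of :: "(nat \<Rightarrow> nat) \<Rightarrow> (nat \<Rightarrow> 'n::finite) \<Rightarrow> real^'n \<Rightarrow> nat \<Rightarrow> nat \<Rightarrow> real" where
  "filters_of k pidx x = (\<lambda>i n. x $ pidx ((\<Sum>j\<in>{1..<i}. k j) + n))"

definition Pi_net :: "nat \<Rightarrow> (nat \<Rightarrow> nat) \<Rightarrow> (nat \<Rightarrow> nat) \<Rightarrow> (nat \<Rightarrow> nat) \<Rightarrow> (nat \<Rightarrow> 'n::finite) \<Rightarrow> real^'n \<Rightarrow> nat \<Rightarrow> nat \<Rightarrow> real" where
  "Pi_net N d k s pidx x = net_mat d k s (filters_of k pidx x) N"

text \<open>The final filter pi(w): the filter of the convolutional matrix Pi(w), i.e. its first row
  (entries 0..kv-1); its l1 norm.\<close>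
definition final_filter :: "nat \<Rightarrow> (nat \<Rightarrow> nat) \<Rightarrow> (nat \<Rightarrow> nat) \<Rightarrow> (nat \<Rightarrow> nat) \<Rightarrow> (nat \<Rightarrow> 'n::finite) \<Rightarrow> real^'n \<Rightarrow> nat \<Rightarrow> real" where
  "final_filter N d k s pidx x = (\<lambda>n. Pi_net N d k s pidx x 0 n)"

definition final_filter_l1 :: "nat \<Rightarrow> (nat \<Rightarrow> nat) \<Rightarrow> (nat \<Rightarrow> nat) \<Rightarrow> (nat \<Rightarrow> nat) \<Rightarrow> (nat \<Rightarrow> 'n::finite) \<Rightarrow> real^'n \<Rightarrow> real" where
  "final_filter_l1 N d k s pidx x = (\<Sum>n<kv N k s. \<bar>final_filter N d k s pidx x n\<bar>)"

text \<open>Network output Pi(w) x for an input x in R^{d_0} (given by its coordinates 0..d_0-1),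
  as a vector in R^{d_N} whose coordinates are enumerated by oidx : {0..<d N} -> 'o.\<close>
definition net_out :: "nat \<Rightarrow> (nat \<Rightarrow> nat) \<Rightarrow> (nat \<Rightarrow> nat) \<Rightarrow> (nat \<Rightarrow> nat) \<Rightarrow> (nat \<Rightarrow> 'n::finite) \<Rightarrow> (nat \<Rightarrow> 'o::finite) \<Rightarrow> real^'n \<Rightarrow> (nat \<Rightarrow> real) \<Rightarrow> real^'o" where
  "net_out N d k s pidx oidx x inp =
     (\<chi> j. \<Sum>c<d 0. Pi_net N d k s pidx x (inv_into {..<d N} oidx j) c * inp c)"

definition train_loss :: "nat \<Rightarrow> (nat \<Rightarrow> nat) \<Rightarrow> (nat \<Rightarrow> nat) \<Rightarrow> (nat \<Rightarrow> nat) \<Rightarrow> (nat \<Rightarrow> 'n::finite) \<Rightarrow> (nat \<Rightarrow> 'o::finite)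
    \<Rightarrow> ((real^'o) \<times> (real^'o) \<Rightarrow> real) \<Rightarrow> nat \<Rightarrow> (nat \<Rightarrow> nat \<Rightarrow> real) \<Rightarrow> (nat \<Rightarrow> real^'o) \<Rightarrow> real^'n \<Rightarrow> real" where
  "train_loss N d k s pidx oidx l m X Y x = (\<Sum>i<m. l (net_out N d k s pidx oidx x (X i), Y i))"

text \<open>Power with the convention a^0 = 1 (also for a = 0), for a >= 0.\<close>
definition loj_pow :: "real \<Rightarrow> real \<Rightarrow> real" where
  "loj_pow a \<mu> = (if \<mu> = 0 then 1 else a powr \<mu>)"

definition lojasiewicz_at :: "('a::real_normed_vector \<Rightarrow> real) \<Rightarrow> ('a \<Rightarrow> 'a) \<Rightarrow> 'a \<Rightarrow> bool" where
  "lojasiewicz_at \<phi> G x \<longleftrightarrow>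
     (\<exists>U c \<mu>. open U \<and> x \<in> U \<and> c > 0 \<and> 0 \<le> \<mu> \<and> \<mu> < 1 \<and>
        (\<forall>y\<in>U. loj_pow \<bar>\<phi> x - \<phi> y\<bar> \<mu> \<le> c * norm (G y)))"

definition grad_flow_sol :: "('a::real_normed_vector \<Rightarrow> 'a) \<Rightarrow> 'a \<Rightarrow> real set \<Rightarrow> (real \<Rightarrow> 'a) \<Rightarrow> bool" where
  "grad_flow_sol G w0 I w \<longleftrightarrow>
     0 \<in> I \<and> w 0 = w0 \<and> (\<forall>t\<in>I. (w has_vector_derivative - G (w t)) (at t))"

end

theory Submission
  imports Defs
begin

(* The gradient field is C^1, hence Lipschitz on bounded sets, so Picard iteration and Gronwall's
   inequality give a unique maximal integral curve; it exists for all t >= 0 as soon as it stays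
   bounded there.  Boundedness comes from the network structure: the loss depends on w only through
   Pi(w), which does not change when the layer filters are rescaled by factors with product 1, so the
   flow conserves the differences ||w^(i)||^2 - ||w^(1)||^2.  Moreover ||pi(w)||_1 is bounded below
   by a positive multiple of the product of the layer norms (the lowest-order coefficient of a
   product of nonzero polynomials is nonzero; then use homogeneity and compactness).  As the loss
   decreases along the flow, the hypothesis on g bounds that product, and together with the
   conserved differences every layer norm.  Finally, a bounded gradient flow of a function with the
   Lojasiewicz property has finite length near an accumulation point, hence converges, and its
   limit is a critical point. *)

section \<open>Locally Lipschitz ordinary differential equations\<close>

definition ode_solution :: "('a::real_normed_vector \<Rightarrow> 'a) \<Rightarrow> 'a \<Rightarrow> real set \<Rightarrow> (real \<Rightarrow> 'a) \<Rightarrow> bool" where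
  "ode_solution F x0 I y \<longleftrightarrow> 0 \<in> I \<and> y 0 = x0 \<and> (\<forall>t\<in>I. (y has_vector_derivative F (y t)) (at t))"

lemma ode_solution_on_segment:
  assumes "ode_solution F x0 I y" "is_interval I" "t \<in> I" "\<tau> \<in> {0..t}"
  shows "(y has_vector_derivative F (y \<tau>)) (at \<tau>)"
proof -
  have "\<tau> \<in> I"
    using assms unfolding ode_solution_def is_interval_1 by (meson atLeastAtMost_iff)
  then show ?thesis
    using assms(1) by (simp add: ode_solution_def)
qed

lemma has_real_derivative_inner_self:
  fixes u :: "real \<Rightarrow> 'a::real_inner"
  assumes "(u has_vector_derivative u') (at t)"
  shows "((\<lambda>\<tau>. u \<tau> \<bullet> u \<tau>) has_real_derivative 2 * (u t \<bullet> u')) (at t)"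
  using bounded_bilinear.has_vector_derivative[OF bounded_bilinear_inner assms assms]
  by (simp add: has_real_derivative_iff_has_vector_derivative inner_commute)

lemma gradient_chain_rule:
  assumes "(f has_derivative (\<lambda>h. g \<bullet> h)) (at (w t))" and "(w has_vector_derivative v) (at t)"
  shows "((\<lambda>\<tau>. f (w \<tau>)) has_real_derivative g \<bullet> v) (at t)"
proof -
  have "((\<lambda>\<tau>. f (w \<tau>)) has_derivative (\<lambda>h. g \<bullet> (h *\<^sub>R v))) (at t)"
    using has_derivative_compose[OF assms(2)[unfolded has_vector_derivative_def] assms(1)] .
  then show ?thesis
    unfolding has_field_derivative_def by (rule has_derivative_eq_rhs) auto
qed

lemma has_vector_derivative_imp_continuous_on:
  assumes "\<And>t. t \<in> S \<Longrightarrow> (y has_vector_derivative y' t) (at t)"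
  shows "continuous_on S y"
  by (rule continuous_on_vector_derivative, rule has_vector_derivative_at_within, rule assms)

lemma gronwall_zero_forward:
  fixes e e' :: "real \<Rightarrow> real"
  assumes ab: "a \<le> b"
    and deriv: "\<And>\<tau>. \<tau> \<in> {a..b} \<Longrightarrow> (e has_real_derivative e' \<tau>) (at \<tau>)"
    and growth: "\<And>\<tau>. \<tau> \<in> {a..b} \<Longrightarrow> e' \<tau> \<le> C * e \<tau>"
    and nonneg: "0 \<le> e b" and zero: "e a = 0"
  shows "e b = 0"
proof -
  have cont: "continuous_on {a..b} e"
    using deriv by (meson DERIV_isCont continuous_at_imp_continuous_on)
  have "e b * exp (- C * b) \<le> e a * exp (- C * a)"
  proof (rule DERIV_nonpos_imp_decreasing_open[OF ab])
    fix x assume x: "a < x" "x < b"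
    have "((\<lambda>\<tau>. e \<tau> * exp (- C * \<tau>)) has_real_derivative (e' x - C * e x) * exp (- C * x)) (at x)"
      using x by (auto intro!: derivative_eq_intros deriv simp: algebra_simps)
    moreover have "(e' x - C * e x) * exp (- C * x) \<le> 0"
      using growth[of x] x by (intro mult_nonpos_nonneg) auto
    ultimately show "\<exists>y. ((\<lambda>\<tau>. e \<tau> * exp (- C * \<tau>)) has_real_derivative y) (at x) \<and> y \<le> 0"
      by blast
  qed (intro continuous_intros cont)
  then show ?thesis
    using nonneg zero by (simp add: mult_le_0_iff)
qed

lemma gronwall_zero_backward:
  fixes e e' :: "real \<Rightarrow> real"
  assumes ab: "a \<le> b"
    and deriv: "\<And>\<tau>. \<tau> \<in> {a..b} \<Longrightarrow> (e has_real_derivative e' \<tau>) (at \<tau>)"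
    and growth: "\<And>\<tau>. \<tau> \<in> {a..b} \<Longrightarrow> - e' \<tau> \<le> C * e \<tau>"
    and nonneg: "0 \<le> e a" and zero: "e b = 0"
  shows "e a = 0"
proof -
  have cont: "continuous_on {a..b} e"
    using deriv by (meson DERIV_isCont continuous_at_imp_continuous_on)
  have "e a * exp (C * a) \<le> e b * exp (C * b)"
  proof (rule DERIV_nonneg_imp_increasing_open[OF ab])
    fix x assume x: "a < x" "x < b"
    have "((\<lambda>\<tau>. e \<tau> * exp (C * \<tau>)) has_real_derivative (e' x + C * e x) * exp (C * x)) (at x)"
      using x by (auto intro!: derivative_eq_intros deriv simp: algebra_simps)
    moreover have "0 \<le> (e' x + C * e x) * exp (C * x)"
      using growth[of x] x by simp
    ultimately show "\<exists>y. ((\<lambda>\<tau>. e \<tau> * exp (C * \<tau>)) has_real_derivative y) (at x) \<and> 0 \<le> y"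
      by blast
  qed (intro continuous_intros cont)
  then show ?thesis
    using nonneg zero by (simp add: mult_le_0_iff)
qed

lemma ode_solutions_unique:
  fixes F :: "'a::real_inner \<Rightarrow> 'a"
  assumes lip: "\<And>R. \<exists>L. L-lipschitz_on (cball 0 R) F"
    and J: "is_interval J" "t0 \<in> J" "t \<in> J"
    and y: "\<And>\<tau>. \<tau> \<in> J \<Longrightarrow> (y has_vector_derivative F (y \<tau>)) (at \<tau>)"
    and z: "\<And>\<tau>. \<tau> \<in> J \<Longrightarrow> (z has_vector_derivative F (z \<tau>)) (at \<tau>)"
    and eq: "y t0 = z t0"
  shows "y t = z t"
proof -
  define a where "a = min t0 t"
  define b where "b = max t0 t"
  have ab: "a \<le> b"
    by (simp add: a_def b_def)
  have "a \<in> J" "b \<in> J"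
    using J by (simp_all add: a_def b_def min_def max_def)
  then have sub: "{a..b} \<subseteq> J"
    using J(1) unfolding is_interval_1 by (meson atLeastAtMost_iff subsetI)
  have "continuous_on {a..b} y" "continuous_on {a..b} z"
    using sub by (auto intro!: has_vector_derivative_imp_continuous_on y z)
  then have "bounded (y ` {a..b} \<union> z ` {a..b})"
    by (intro compact_imp_bounded compact_Un compact_continuous_image compact_Icc)
  then obtain R where R0: "\<And>x. x \<in> y ` {a..b} \<union> z ` {a..b} \<Longrightarrow> norm x \<le> R"
    by (metis bounded_iff)
  have R: "y \<tau> \<in> cball 0 R" "z \<tau> \<in> cball 0 R" if "\<tau> \<in> {a..b}" for \<tau>
    using R0[of "y \<tau>"] R0[of "z \<tau>"] that by simp_all
  obtain L where L: "L-lipschitz_on (cball 0 R) F"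
    using lip by blast
  define e where "e \<tau> = (y \<tau> - z \<tau>) \<bullet> (y \<tau> - z \<tau>)" for \<tau>
  define e' where "e' \<tau> = 2 * ((y \<tau> - z \<tau>) \<bullet> (F (y \<tau>) - F (z \<tau>)))" for \<tau>
  have deriv: "(e has_real_derivative e' \<tau>) (at \<tau>)" if "\<tau> \<in> {a..b}" for \<tau>
    unfolding e_def e'_def
    using sub that by (intro has_real_derivative_inner_self has_vector_derivative_diff y z) auto
  have growth: "\<bar>e' \<tau>\<bar> \<le> 2 * L * e \<tau>" if "\<tau> \<in> {a..b}" for \<tau>
  proof -
    have "\<bar>e' \<tau>\<bar> \<le> 2 * (norm (y \<tau> - z \<tau>) * norm (F (y \<tau>) - F (z \<tau>)))"
      unfolding e'_def using Cauchy_Schwarz_ineq2 by (simp add: abs_mult)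
    also have "\<dots> \<le> 2 * (norm (y \<tau> - z \<tau>) * (L * norm (y \<tau> - z \<tau>)))"
      using lipschitz_on_normD[OF L R[OF that]] by (simp add: mult_left_mono)
    also have "\<dots> = 2 * L * e \<tau>"
      by (simp add: e_def power2_norm_eq_inner[symmetric] power2_eq_square)
    finally show ?thesis .
  qed
  have "e b = 0" if "e a = 0"
    by (rule gronwall_zero_forward[OF ab deriv _ _ that]) (use growth in \<open>auto simp: e_def abs_le_iff\<close>)
  moreover have "e a = 0" if "e b = 0"
    by (rule gronwall_zero_backward[OF ab deriv _ _ that]) (use growth in \<open>auto simp: e_def abs_le_iff\<close>)
  moreover have "e t0 = 0"
    by (simp add: e_def eq)
  moreover have "{a, b} = {t0, t}"
    by (auto simp: a_def b_def)
  ultimately have "e t = 0"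
    by (metis doubleton_eq_iff)
  then show ?thesis
    by (simp add: e_def)
qed

lemma norm_integral_diff_le:
  fixes f :: "real \<Rightarrow> 'a::banach"
  assumes f: "continuous_on {a..b} f" and "t0 \<in> {a..b}" "u \<in> {a..b}"
    and bound: "\<And>s. s \<in> {a..b} \<Longrightarrow> norm (f s) \<le> B"
  shows "norm (integral {a..u} f - integral {a..t0} f) \<le> B * \<bar>u - t0\<bar>"
proof -
  have diff: "integral {a..q} f - integral {a..p} f = integral {p..q} f"
    and bound_pq: "norm (integral {p..q} f) \<le> B * (q - p)"
    if "p \<in> {a..b}" "q \<in> {a..b}" "p \<le> q" for p q
  proof -
    have "continuous_on {a..q} f" "continuous_on {p..q} f"
      using that by (auto intro: continuous_on_subset[OF f])
    then have "integral {a..p} f + integral {p..q} f = integral {a..q} f"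
      using that by (intro Henstock_Kurzweil_Integration.integral_combine integrable_continuous_interval) auto
    then show "integral {a..q} f - integral {a..p} f = integral {p..q} f"
      by (simp add: algebra_simps)
    show "norm (integral {p..q} f) \<le> B * (q - p)"
      using that \<open>continuous_on {p..q} f\<close> by (intro integral_bound) (auto intro: bound)
  qed
  show ?thesis
  proof (cases "u \<le> t0")
    case True
    then show ?thesis
      using diff[of u t0] bound_pq[of u t0] assms(2,3) by (simp add: norm_minus_commute)
  next
    case False
    then show ?thesis
      using diff[of t0 u] bound_pq[of t0 u] assms(2,3) by simp
  qed
qed

lemma has_vector_derivative_of_integral_equation:
  fixes g :: "real \<Rightarrow> 'a::banach"
  assumes g: "continuous_on {a..b} g" and t: "t \<in> {a<..<b}"
    and y: "\<And>u. u \<in> {a<..<b} \<Longrightarrow> y u = c + integral {a..u} g"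
  shows "(y has_vector_derivative g t) (at t)"
proof -
  have "((\<lambda>u. integral {a..u} g) has_vector_derivative g t) (at t within {a..b})"
    using t by (intro integral_has_vector_derivative[OF g]) auto
  then have "((\<lambda>u. integral {a..u} g) has_vector_derivative g t) (at t within {a<..<b})"
    by (rule has_vector_derivative_within_subset) auto
  then have "((\<lambda>u. integral {a..u} g) has_vector_derivative g t) (at t)"
    using at_within_open[OF t open_greaterThanLessThan] by simp
  then have "((\<lambda>u. c + integral {a..u} g) has_vector_derivative g t) (at t)"
    by (rule has_vector_derivative_eq_rhs[OF has_vector_derivative_add[OF has_vector_derivative_const]]) simp
  then show ?thesis
    by (rule has_vector_derivative_transform_within_open[OF _ open_greaterThanLessThan t]) (simp add: y)
qed

locale picard_iteration =
  fixes F :: "'a::euclidean_space \<Rightarrow> 'a" and x0 :: 'a and t0 L M h :: real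
  assumes lip: "L-lipschitz_on (cball x0 1) F"
    and bound: "\<And>x. x \<in> cball x0 1 \<Longrightarrow> norm (F x) \<le> M"
    and h: "0 < h" "M * h \<le> 1" "L * h \<le> 1/2"
begin

definition clamp :: "real \<Rightarrow> real" where
  "clamp t = max (t0 - h) (min (t0 + h) t)"

definition curves :: "(real \<Rightarrow>\<^sub>C 'a) set" where
  "curves = PiC UNIV (\<lambda>_. cball x0 1)"

text \<open>The oriented integral from \<open>t0\<close> to \<open>t\<close> is written as a difference of integrals from
  \<open>t0 - h\<close>, with \<open>t\<close> clamped to the time interval, so that the Picard map yields bounded
  continuous functions on the whole real line.\<close>

definition picard :: "(real \<Rightarrow>\<^sub>C 'a) \<Rightarrow> real \<Rightarrow> 'a" where
  "picard y t = x0 + (integral {t0 - h..clamp t} (\<lambda>s. F (apply_bcontfun y s))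
      - integral {t0 - h..t0} (\<lambda>s. F (apply_bcontfun y s)))"

lemma clamp: "clamp t \<in> {t0 - h..t0 + h}" "\<bar>clamp t - t0\<bar> \<le> h"
  using h(1) by (auto simp: clamp_def)

lemma continuous_on_clamp: "continuous_on A clamp"
  unfolding clamp_def by (intro continuous_intros)

lemma t0_mem: "t0 \<in> {t0 - h..t0 + h}"
  using h(1) by simp

lemma mem_curves_iff: "y \<in> curves \<longleftrightarrow> (\<forall>t. apply_bcontfun y t \<in> cball x0 1)"
  unfolding curves_def mem_PiC_iff by auto

lemma continuous_on_F_curve: "y \<in> curves \<Longrightarrow> continuous_on A (\<lambda>s. F (apply_bcontfun y s))"
  by (rule continuous_on_compose2[OF lipschitz_on_continuous_on[OF lip] continuous_on_apply_bcontfun])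
    (auto simp: mem_curves_iff)

lemma picard_near: "y \<in> curves \<Longrightarrow> dist x0 (picard y t) \<le> 1"
proof -
  assume y: "y \<in> curves"
  have "norm (picard y t - x0) \<le> M * \<bar>clamp t - t0\<bar>"
    unfolding picard_def using y
    by (simp, intro norm_integral_diff_le[OF continuous_on_F_curve t0_mem clamp(1)] bound)
      (auto simp: mem_curves_iff)
  also have "\<dots> \<le> M * h"
    using order_trans[OF norm_ge_zero bound[of x0]] by (intro mult_left_mono[OF clamp(2)]) simp
  finally show ?thesis
    using h(2) by (simp add: dist_norm norm_minus_commute)
qed

lemma picard_contraction:
  assumes y: "y \<in> curves" and z: "z \<in> curves"
  shows "dist (picard y t) (picard z t) \<le> 1/2 * dist y z"
proof -
  let ?g = "\<lambda>s. F (apply_bcontfun y s) - F (apply_bcontfun z s)"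
  have int: "(\<lambda>s. F (apply_bcontfun v s)) integrable_on {t0 - h..u}" if "v \<in> curves" for v u
    using that by (intro integrable_continuous_interval continuous_on_F_curve)
  have "picard y t - picard z t = integral {t0 - h..clamp t} ?g - integral {t0 - h..t0} ?g"
    unfolding picard_def integral_diff[OF int[OF y] int[OF z]] by (simp add: algebra_simps)
  moreover have "norm (?g s) \<le> L * dist y z" for s
  proof -
    have "norm (?g s) \<le> L * dist (apply_bcontfun y s) (apply_bcontfun z s)"
      using lipschitz_onD[OF lip] y z by (simp add: mem_curves_iff dist_norm)
    also have "\<dots> \<le> L * dist y z"
      using lipschitz_on_nonneg[OF lip] by (intro mult_left_mono dist_bounded)
    finally show ?thesis .
  qed
  ultimately have "norm (picard y t - picard z t) \<le> L * dist y z * \<bar>clamp t - t0\<bar>"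
    using y z by (simp, intro norm_integral_diff_le[OF _ t0_mem clamp(1)] continuous_intros continuous_on_F_curve)
  also have "\<dots> \<le> (L * h) * dist y z"
    using lipschitz_on_nonneg[OF lip] mult_left_mono[OF clamp(2), of "L * dist y z"] by (simp add: mult_ac)
  also have "\<dots> \<le> 1/2 * dist y z"
    using h(3) by (intro mult_right_mono) auto
  finally show ?thesis
    by (simp add: dist_norm)
qed

lemma picard_bcontfun:
  assumes y: "y \<in> curves"
  shows "picard y \<in> bcontfun"
proof (rule bcontfun_normI)
  have "continuous_on {t0 - h..t0 + h} (\<lambda>u. integral {t0 - h..u} (\<lambda>s. F (apply_bcontfun y s)))"
    using y by (intro indefinite_integral_continuous_1 integrable_continuous_interval continuous_on_F_curve)
  then have "continuous_on UNIV (\<lambda>t. integral {t0 - h..clamp t} (\<lambda>s. F (apply_bcontfun y s)))"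
    using clamp(1) by (intro continuous_on_compose2[OF _ continuous_on_clamp]) auto
  then show "continuous_on UNIV (picard y)"
    unfolding picard_def by (intro continuous_intros)
  show "norm (picard y t) \<le> norm x0 + 1" for t
    using picard_near[OF y, of t] norm_triangle_ineq2[of "picard y t" x0]
    by (simp add: dist_norm norm_minus_commute)
qed

lemma picard_fixpoint:
  obtains y where "y \<in> curves" "picard y = apply_bcontfun y"
proof -
  define T where "T y = Bcontfun (picard y)" for y
  have T_apply: "apply_bcontfun (T y) = picard y" if "y \<in> curves" for y
    unfolding T_def using picard_bcontfun[OF that] by (simp add: Bcontfun_inverse)
  have "\<exists>!y\<in>curves. T y = y"
  proof (rule Banach_fix)
    show "complete curves"
      unfolding curves_def complete_eq_closed by (rule closed_PiC) simp
    show "curves \<noteq> {}"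
      using mem_curves_iff[of "const_bcontfun x0"] by (auto simp: const_bcontfun.rep_eq)
    show "T ` curves \<subseteq> curves"
      using picard_near by (auto simp: mem_curves_iff T_apply)
    show "dist (T y) (T z) \<le> 1/2 * dist y z" if "y \<in> curves" "z \<in> curves" for y z
      using that picard_contraction by (intro dist_bound) (simp add: T_apply)
  qed simp_all
  then show ?thesis
    using T_apply that by metis
qed

lemma picard_local_solution:
  obtains y where "y t0 = x0" "\<And>t. t \<in> {t0-h<..<t0+h} \<Longrightarrow> (y has_vector_derivative F (y t)) (at t)"
proof -
  obtain y where y: "y \<in> curves" "picard y = apply_bcontfun y"
    by (rule picard_fixpoint)
  show ?thesis
  proof
    show "apply_bcontfun y t0 = x0"
      using h(1) fun_cong[OF y(2), of t0] by (simp add: picard_def clamp_def)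
    show "(apply_bcontfun y has_vector_derivative F (apply_bcontfun y t)) (at t)"
      if "t \<in> {t0-h<..<t0+h}" for t
    proof (rule has_vector_derivative_of_integral_equation[OF continuous_on_F_curve[OF y(1)] that])
      show "apply_bcontfun y u = x0 - integral {t0 - h..t0} (\<lambda>s. F (apply_bcontfun y s))
          + integral {t0 - h..u} (\<lambda>s. F (apply_bcontfun y s))" if "u \<in> {t0-h<..<t0+h}" for u
        using that fun_cong[OF y(2), of u] by (simp add: picard_def clamp_def algebra_simps)
    qed
  qed
qed

end

lemma ode_local_existence_uniform:
  fixes F :: "'a::euclidean_space \<Rightarrow> 'a"
  assumes lip: "\<And>R. \<exists>L. L-lipschitz_on (cball 0 R) F"
  obtains h where "0 < h"
    "\<And>t0 x0. norm x0 \<le> R \<Longrightarrow>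
       \<exists>y. y t0 = x0 \<and> (\<forall>t\<in>{t0-h<..<t0+h}. (y has_vector_derivative F (y t)) (at t))"
proof -
  obtain L where L: "L-lipschitz_on (cball 0 (R + 1)) F"
    using lip by blast
  have "bounded (F ` cball 0 (R + 1))"
    by (intro compact_imp_bounded compact_continuous_image lipschitz_on_continuous_on[OF L] compact_cball)
  then obtain M where M: "0 < M" "\<And>x. x \<in> cball 0 (R + 1) \<Longrightarrow> norm (F x) \<le> M"
    unfolding bounded_pos by auto
  define h where "h = 1 / (2 * (M + L + 1))"
  have L0: "0 \<le> L"
    using lipschitz_on_nonneg[OF L] .
  have h: "0 < h" "M * h \<le> 1" "L * h \<le> 1/2"
    using M(1) L0 by (auto simp: h_def field_simps)
  show ?thesis
  proof (rule that[OF h(1)])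
    fix t0 :: real and x0 :: 'a
    assume "norm x0 \<le> R"
    have sub: "cball x0 1 \<subseteq> cball 0 (R + 1)"
    proof
      fix x assume "x \<in> cball x0 1"
      then have "norm (x - x0) \<le> 1"
        by (simp add: dist_norm norm_minus_commute)
      then show "x \<in> cball 0 (R + 1)"
        using \<open>norm x0 \<le> R\<close> norm_triangle_sub[of x x0] by simp
    qed
    interpret picard_iteration F x0 t0 L M h
      using lipschitz_on_subset[OF L sub] M(2) h sub by unfold_locales auto
    obtain y where "y t0 = x0" "\<And>t. t \<in> {t0-h<..<t0+h} \<Longrightarrow> (y has_vector_derivative F (y t)) (at t)"
      using picard_local_solution by blast
    then show "\<exists>y. y t0 = x0 \<and> (\<forall>t\<in>{t0-h<..<t0+h}. (y has_vector_derivative F (y t)) (at t))"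
      by blast
  qed
qed

definition maximal_ode_solution :: "('a::real_normed_vector \<Rightarrow> 'a) \<Rightarrow> 'a \<Rightarrow> real set \<Rightarrow> (real \<Rightarrow> 'a) \<Rightarrow> bool" where
  "maximal_ode_solution F x0 I y \<longleftrightarrow> open I \<and> is_interval I \<and> ode_solution F x0 I y \<and>
     (\<forall>J z. open J \<and> is_interval J \<and> ode_solution F x0 J z \<longrightarrow> J \<subseteq> I \<and> (\<forall>t\<in>J. z t = y t))"

lemma ode_solutions_agree:
  fixes F :: "'a::real_inner \<Rightarrow> 'a"
  assumes lip: "\<And>R. \<exists>L. L-lipschitz_on (cball 0 R) F"
    and "is_interval J" "ode_solution F x0 J y" "is_interval J'" "ode_solution F x0 J' z"
    and "t \<in> J \<inter> J'"
  shows "y t = z t"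
  by (rule ode_solutions_unique[OF lip, of "J \<inter> J'" 0])
    (use assms in \<open>auto simp: ode_solution_def intro: is_interval_Int\<close>)

lemma ode_local_solution:
  fixes F :: "'a::euclidean_space \<Rightarrow> 'a"
  assumes lip: "\<And>R. \<exists>L. L-lipschitz_on (cball 0 R) F"
  obtains J y where "open J" "is_interval J" "ode_solution F x0 J y"
proof -
  obtain h where h: "0 < h" "\<And>t0 x. norm x \<le> norm x0 \<Longrightarrow>
      \<exists>y. y t0 = x \<and> (\<forall>t\<in>{t0-h<..<t0+h}. (y has_vector_derivative F (y t)) (at t))"
    using ode_local_existence_uniform[OF lip] by blast
  obtain y where "y 0 = x0" "\<forall>t\<in>{-h<..<h}. (y has_vector_derivative F (y t)) (at t)"
    using h(2)[of x0 0] by auto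
  then show ?thesis
    using that[of "{-h<..<h}" y] h(1) by (auto simp: ode_solution_def is_interval_1)
qed

lemma ode_maximal_solution_exists:
  fixes F :: "'a::euclidean_space \<Rightarrow> 'a"
  assumes lip: "\<And>R. \<exists>L. L-lipschitz_on (cball 0 R) F"
  shows "\<exists>I y. maximal_ode_solution F x0 I y"
proof -
  define P where "P J z \<longleftrightarrow> open J \<and> is_interval J \<and> ode_solution F x0 J z" for J z
  define I where "I = \<Union>{J. \<exists>z. P J z}"
  define y where "y t = (SOME z. \<exists>J. t \<in> J \<and> P J z) t" for t
  have y_eq: "y t = z t" if "P J z" "t \<in> J" for J z t
  proof -
    have "\<exists>z J. t \<in> J \<and> P J z"
      using that by blast
    then have "\<exists>J. t \<in> J \<and> P J (SOME z. \<exists>J. t \<in> J \<and> P J z)"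
      by (rule someI_ex)
    then obtain J' where "t \<in> J'" "P J' (SOME z. \<exists>J. t \<in> J \<and> P J z)"
      by blast
    then have "(SOME z. \<exists>J. t \<in> J \<and> P J z) t = z t"
      by (intro ode_solutions_agree[OF lip, of J' x0 _ J z t])
        (use that in \<open>auto simp: P_def\<close>)
    then show ?thesis
      by (simp add: y_def)
  qed
  obtain J0 z0 where P0: "P J0 z0"
    using ode_local_solution[OF lip] unfolding P_def by blast
  have "ode_solution F x0 I y"
    unfolding ode_solution_def
  proof (intro conjI ballI)
    have "0 \<in> J0"
      using P0 by (simp add: P_def ode_solution_def)
    then show "0 \<in> I"
      using P0 unfolding I_def by blast
    show "y 0 = x0"
      using P0 y_eq[OF P0, of 0] by (simp add: P_def ode_solution_def)
  next
    fix t assume "t \<in> I"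
    then obtain J z where Jz: "P J z" "t \<in> J"
      unfolding I_def by blast
    then have "(z has_vector_derivative F (z t)) (at t)" "open J"
      by (auto simp: P_def ode_solution_def)
    then have "(y has_vector_derivative F (z t)) (at t)"
      using Jz(2) by (rule has_vector_derivative_transform_within_open) (simp add: y_eq[OF Jz(1)])
    then show "(y has_vector_derivative F (y t)) (at t)"
      by (simp add: y_eq[OF Jz])
  qed
  moreover have "is_interval I"
    unfolding I_def is_interval_connected_1
  proof (rule connected_Union)
    show "connected J" if "J \<in> {J. \<exists>z. P J z}" for J
      using that by (auto simp: P_def is_interval_connected_1)
    have "0 \<in> \<Inter>{J. \<exists>z. P J z}"
      by (auto simp: P_def ode_solution_def)
    then show "\<Inter>{J. \<exists>z. P J z} \<noteq> {}"
      by blast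
  qed
  moreover have "open I"
    unfolding I_def P_def by auto
  moreover have "J \<subseteq> I \<and> (\<forall>t\<in>J. z t = y t)" if "P J z" for J z
    using that y_eq unfolding I_def by auto
  ultimately have "maximal_ode_solution F x0 I y"
    unfolding maximal_ode_solution_def P_def by blast
  then show ?thesis
    by blast
qed

lemma ode_solution_extend:
  fixes F :: "'a::real_inner \<Rightarrow> 'a"
  assumes lip: "\<And>R. \<exists>L. L-lipschitz_on (cball 0 R) F"
    and I: "open I" "is_interval I" "ode_solution F x0 I y"
    and K: "open K" "is_interval K" "t1 \<in> I \<inter> K"
    and z: "z t1 = y t1" "\<And>t. t \<in> K \<Longrightarrow> (z has_vector_derivative F (z t)) (at t)"
  shows "open (I \<union> K) \<and> is_interval (I \<union> K) \<and> ode_solution F x0 (I \<union> K) (\<lambda>t. if t \<in> I then y t else z t)"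
proof (intro conjI)
  let ?u = "\<lambda>t. if t \<in> I then y t else z t"
  have y: "(y has_vector_derivative F (y t)) (at t)" if "t \<in> I" for t
    using I(3) that by (simp add: ode_solution_def)
  have agree: "z t = y t" if "t \<in> I \<inter> K" for t
    by (rule ode_solutions_unique[OF lip, of "I \<inter> K" t1]) (use I(2) K z y that in \<open>auto intro: is_interval_Int\<close>)
  show "open (I \<union> K)"
    using I(1) K(1) by auto
  show "is_interval (I \<union> K)"
    using I(2) K(2,3) unfolding is_interval_connected_1 by (intro connected_Un) auto
  have "(?u has_vector_derivative F (?u t)) (at t)" if "t \<in> I \<union> K" for t
  proof (cases "t \<in> I")
    case True
    have "(?u has_vector_derivative F (y t)) (at t)"
      by (rule has_vector_derivative_transform_within_open[OF y[OF True] I(1) True]) simp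
    then show ?thesis
      using True by simp
  next
    case False
    then have "t \<in> K"
      using that by blast
    have "(?u has_vector_derivative F (z t)) (at t)"
      by (rule has_vector_derivative_transform_within_open[OF z(2)[OF \<open>t \<in> K\<close>] K(1) \<open>t \<in> K\<close>])
        (simp add: agree)
    then show ?thesis
      using False by simp
  qed
  then show "ode_solution F x0 (I \<union> K) ?u"
    using I(3) by (auto simp: ode_solution_def)
qed

lemma maximal_ode_solution_forward_complete:
  fixes F :: "'a::euclidean_space \<Rightarrow> 'a"
  assumes lip: "\<And>R. \<exists>L. L-lipschitz_on (cball 0 R) F"
    and max: "maximal_ode_solution F x0 I y"
    and bound: "\<And>t. t \<in> I \<Longrightarrow> 0 \<le> t \<Longrightarrow> norm (y t) \<le> R"
  shows "{0..} \<subseteq> I"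
proof (rule ccontr)
  assume "\<not> {0..} \<subseteq> I"
  then have ne: "{0..} - I \<noteq> {}"
    by blast
  have I: "open I" "is_interval I" "ode_solution F x0 I y"
    using max by (auto simp: maximal_ode_solution_def)
  define b where "b = Inf ({0..} - I)"
  have "closed ({0..} - I)"
    using I(1) by (intro closed_Diff) auto
  then have b: "b \<in> {0..} - I"
    unfolding b_def by (intro closed_contains_Inf ne) (auto intro: bdd_belowI[of _ 0])
  have below: "t \<in> I" if "0 \<le> t" "t < b" for t
    using that cInf_lower[of t "{0..} - I"] by (force simp: b_def intro: bdd_belowI[of _ 0])
  have "0 \<in> I"
    using I(3) by (simp add: ode_solution_def)
  then have "0 < b"
    using b by (cases "b = 0") auto
  \<comment> \<open>Restart the solution shortly before the first time \<open>b\<close> missing from \<open>I\<close>, with an existence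
    time that is uniform along the bounded orbit.\<close>
  obtain h where h: "0 < h" "\<And>t0 x. norm x \<le> R \<Longrightarrow>
      \<exists>z. z t0 = x \<and> (\<forall>t\<in>{t0-h<..<t0+h}. (z has_vector_derivative F (z t)) (at t))"
    using ode_local_existence_uniform[OF lip] by blast
  define t1 where "t1 = max 0 (b - h/2)"
  have t1: "0 \<le> t1" "t1 < b" "b < t1 + h" "t1 \<in> I"
    using \<open>0 < b\<close> h(1) below by (auto simp: t1_def)
  obtain z where z: "z t1 = y t1" "\<And>t. t \<in> {t1-h<..<t1+h} \<Longrightarrow> (z has_vector_derivative F (z t)) (at t)"
    using h(2)[OF bound[OF t1(4,1)], of t1] by auto
  have "open (I \<union> {t1-h<..<t1+h}) \<and> is_interval (I \<union> {t1-h<..<t1+h}) \<and>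
      ode_solution F x0 (I \<union> {t1-h<..<t1+h}) (\<lambda>t. if t \<in> I then y t else z t)"
    using h(1) t1 by (intro ode_solution_extend[OF lip I _ _ _ z]) (auto simp: is_interval_1)
  then have "{t1-h<..<t1+h} \<subseteq> I"
    using max unfolding maximal_ode_solution_def by blast
  moreover have "b \<in> {t1-h<..<t1+h}"
    using t1 h(1) by simp
  ultimately show False
    using b by auto
qed

section \<open>Gradient flows and the Lojasiewicz inequality\<close>

lemma loss_antimono_along_flow:
  fixes f :: "'a::real_inner \<Rightarrow> real"
  assumes gradient: "\<And>x. (f has_derivative (\<lambda>h. G x \<bullet> h)) (at x)"
    and flow: "\<And>t. t \<in> {a..b} \<Longrightarrow> (w has_vector_derivative - G (w t)) (at t)"
    and "a \<le> b"
  shows "f (w b) \<le> f (w a)"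
proof -
  have deriv: "((\<lambda>\<tau>. f (w \<tau>)) has_real_derivative - (G (w t) \<bullet> G (w t))) (at t)"
    if "t \<in> {a..b}" for t
    using gradient_chain_rule[OF gradient flow[OF that]] by simp
  show ?thesis
  proof (rule DERIV_nonpos_imp_decreasing_open[OF \<open>a \<le> b\<close>])
    show "\<exists>y. ((\<lambda>\<tau>. f (w \<tau>)) has_real_derivative y) (at t) \<and> y \<le> 0" if "a < t" "t < b" for t
      using deriv[of t] that by force
    show "continuous_on {a..b} (\<lambda>\<tau>. f (w \<tau>))"
      by (auto intro!: continuous_at_imp_continuous_on DERIV_isCont deriv)
  qed
qed

locale gradient_flow =
  fixes f :: "'a::euclidean_space \<Rightarrow> real" and G :: "'a \<Rightarrow> 'a" and w :: "real \<Rightarrow> 'a"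
  assumes gradient: "\<And>x. (f has_derivative (\<lambda>h. G x \<bullet> h)) (at x)"
    and continuous_gradient: "continuous_on UNIV G"
    and flow: "\<And>t. 0 \<le> t \<Longrightarrow> (w has_vector_derivative - G (w t)) (at t)"
begin

lemma loss_deriv: "0 \<le> t \<Longrightarrow> ((\<lambda>\<tau>. f (w \<tau>)) has_real_derivative - (G (w t) \<bullet> G (w t))) (at t)"
  using gradient_chain_rule[OF gradient flow] by simp

lemma continuous_on_flow: "0 \<le> a \<Longrightarrow> continuous_on {a..} w"
  by (rule has_vector_derivative_imp_continuous_on) (auto intro: flow)

lemma continuous_on_loss: "0 \<le> a \<Longrightarrow> continuous_on {a..} (\<lambda>t. f (w t))"
  by (auto intro!: continuous_at_imp_continuous_on DERIV_isCont loss_deriv)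

lemma loss_antimono: "0 \<le> s \<Longrightarrow> s \<le> t \<Longrightarrow> f (w t) \<le> f (w s)"
  by (rule loss_antimono_along_flow[OF gradient]) (auto intro: flow)

lemma critical_point_of_limit:
  assumes lim: "(w \<longlongrightarrow> z) at_top" and lower: "\<And>t. 0 \<le> t \<Longrightarrow> C \<le> f (w t)"
  shows "G z = 0"
proof (rule ccontr)
  assume "G z \<noteq> 0"
  define \<delta> where "\<delta> = (G z \<bullet> G z) / 2"
  have "0 < \<delta>" "\<delta> < G z \<bullet> G z"
    using \<open>G z \<noteq> 0\<close> by (simp_all add: \<delta>_def)
  have "((\<lambda>t. G (w t) \<bullet> G (w t)) \<longlongrightarrow> G z \<bullet> G z) at_top"
    by (intro tendsto_inner continuous_on_tendsto_compose[OF continuous_gradient lim]) auto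
  from order_tendstoD(1)[OF this \<open>\<delta> < G z \<bullet> G z\<close>]
  obtain T1 where T1: "\<And>t. T1 \<le> t \<Longrightarrow> \<delta> < G (w t) \<bullet> G (w t)"
    unfolding eventually_at_top_linorder by blast
  define T where "T = max T1 0"
  have T: "0 \<le> T" "\<And>t. T \<le> t \<Longrightarrow> \<delta> < G (w t) \<bullet> G (w t)"
    using T1 by (auto simp: T_def)
  \<comment> \<open>Past \<open>T\<close> the loss decreases at least at the rate \<open>\<delta>\<close>, contradicting the lower bound.\<close>
  have decrease: "f (w t) + \<delta> * t \<le> f (w T) + \<delta> * T" if "T \<le> t" for t
  proof (rule DERIV_nonpos_imp_decreasing_open[OF that])
    fix x assume x: "T < x" "x < t"
    have "((\<lambda>\<tau>. f (w \<tau>) + \<delta> * \<tau>) has_real_derivative - (G (w x) \<bullet> G (w x)) + \<delta> * 1) (at x)"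
      using x T by (intro derivative_intros loss_deriv) auto
    moreover have "- (G (w x) \<bullet> G (w x)) + \<delta> * 1 \<le> 0"
      using T(2)[of x] x by auto
    ultimately show "\<exists>y. ((\<lambda>\<tau>. f (w \<tau>) + \<delta> * \<tau>) has_real_derivative y) (at x) \<and> y \<le> 0"
      by blast
  next
    show "continuous_on {T..t} (\<lambda>\<tau>. f (w \<tau>) + \<delta> * \<tau>)"
      by (intro continuous_intros continuous_on_subset[OF continuous_on_loss[OF T(1)]]) auto
  qed
  define t where "t = T + (f (w T) - C + 1) / \<delta>"
  have "T \<le> t"
    using lower[OF T(1)] \<open>0 < \<delta>\<close> by (simp add: t_def)
  then have "C \<le> f (w T) + \<delta> * T - \<delta> * t"
    using lower[of t] decrease[of t] T(1) by simp
  also have "\<dots> = C - 1"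
    using \<open>0 < \<delta>\<close> by (simp add: t_def field_simps)
  finally show False
    by simp
qed

lemma limit_point_of_bounded_flow:
  assumes "bounded (w ` {0..})"
  obtains z where "\<And>t. 0 \<le> t \<Longrightarrow> f z \<le> f (w t)" "((\<lambda>t. f (w t)) \<longlongrightarrow> f z) at_top"
    "\<And>e T. 0 < e \<Longrightarrow> \<exists>t\<ge>T. norm (w t - z) < e"
proof -
  have "bounded (range (\<lambda>n::nat. w (real n)))"
    by (rule bounded_subset[OF assms]) auto
  from bounded_imp_convergent_subsequence[OF this]
  obtain z r where r: "strict_mono r" and "((\<lambda>n. w (real n)) \<circ> r) \<longlonglongrightarrow> z"
    by blast
  then have lim: "(\<lambda>n. w (real (r n))) \<longlonglongrightarrow> z"
    by (simp add: o_def)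
  have "continuous_on UNIV f"
    using gradient by (meson has_derivative_continuous continuous_at_imp_continuous_on)
  then have lim_f: "(\<lambda>n. f (w (real (r n)))) \<longlonglongrightarrow> f z"
    by (rule continuous_on_tendsto_compose[OF _ lim]) auto
  have r_ge: "real m \<le> real (r n)" if "m \<le> n" for m n
    using seq_suble[OF r, of n] that by simp
  have lower: "f z \<le> f (w t)" if "0 \<le> t" for t
  proof (rule LIMSEQ_le_const2[OF lim_f])
    have "f (w (real (r m))) \<le> f (w t)" if "nat \<lceil>t\<rceil> \<le> m" for m
    proof -
      have "t \<le> real (r m)"
        using r_ge[OF that] real_nat_ceiling_ge[of t] by linarith
      with \<open>0 \<le> t\<close> show ?thesis
        by (rule loss_antimono)
    qed
    then show "\<exists>N. \<forall>m\<ge>N. f (w (real (r m))) \<le> f (w t)"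
      by blast
  qed
  have "((\<lambda>t. f (w t)) \<longlongrightarrow> f z) at_top"
  proof (rule tendstoI)
    fix e :: real assume "0 < e"
    then obtain N where N: "dist (f (w (real (r N)))) (f z) < e"
      using lim_f unfolding LIMSEQ_def by blast
    have "dist (f (w t)) (f z) < e" if "real (r N) \<le> t" for t
      using N loss_antimono[OF _ that] lower[of t] that by (simp add: dist_real_def)
    then show "eventually (\<lambda>t. dist (f (w t)) (f z) < e) at_top"
      by (auto simp: eventually_at_top_linorder)
  qed
  moreover have "\<exists>t\<ge>T. norm (w t - z) < e" if "0 < e" for e T
  proof -
    obtain N where N: "\<And>n. N \<le> n \<Longrightarrow> dist (w (real (r n))) z < e"
      using lim \<open>0 < e\<close> unfolding LIMSEQ_def by blast
    define n where "n = max N (nat \<lceil>T\<rceil>)"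
    have "T \<le> real (r n)"
      using r_ge[of "nat \<lceil>T\<rceil>" n] real_nat_ceiling_ge[of T] by (simp add: n_def)
    moreover have "norm (w (real (r n)) - z) < e"
      using N[of n] by (simp add: n_def dist_norm)
    ultimately show ?thesis
      by blast
  qed
  ultimately show ?thesis
    using lower that by blast
qed

lemma flow_stationary_after:
  assumes "0 \<le> t1" and lower: "\<And>t. 0 \<le> t \<Longrightarrow> f (w t1) \<le> f (w t)"
  shows "(w \<longlongrightarrow> w t1) at_top"
proof -
  have G0: "G (w t) = 0" if "t1 < t" for t
  proof -
    have "((\<lambda>\<tau>. f (w \<tau>)) has_real_derivative 0) (at t)"
    proof (rule has_field_derivative_transform_within_open[OF DERIV_const open_greaterThan])
      show "t \<in> {t1<..}"
        using that by simp
      show "f (w t1) = f (w s)" if "s \<in> {t1<..}" for s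
        using that loss_antimono[OF \<open>0 \<le> t1\<close>, of s] lower[of s] \<open>0 \<le> t1\<close> by simp
    qed
    then have "- (G (w t) \<bullet> G (w t)) = 0"
      using \<open>0 \<le> t1\<close> that by (intro DERIV_unique[OF loss_deriv]) auto
    then show ?thesis
      by simp
  qed
  have "w t = w t1" if t1t: "t1 < t" for t
  proof -
    obtain x where "x \<in> {t1<..<t}" "norm (w t - w t1) \<le> norm ((t - t1) *\<^sub>R - G (w x))"
      using mvt_general[OF t1t continuous_on_subset[OF continuous_on_flow[OF \<open>0 \<le> t1\<close>]],
          of "\<lambda>x h. h *\<^sub>R - G (w x)"] flow \<open>0 \<le> t1\<close>
      by (auto simp: has_vector_derivative_def)
    then show ?thesis
      using G0[of x] by simp
  qed
  then show ?thesis
    by (intro tendsto_eventually) (auto simp: eventually_at_top_dense)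
qed

context
  fixes z :: 'a and U :: "'a set" and c \<mu> :: real
  assumes loj: "\<And>x. x \<in> U \<Longrightarrow> loj_pow \<bar>f z - f x\<bar> \<mu> \<le> c * norm (G x)"
    and c: "0 < c" and \<mu>: "\<mu> < 1"
    and above: "\<And>t. 0 \<le> t \<Longrightarrow> f z < f (w t)"
begin

lemma desingularized_loss_deriv:
  assumes "0 \<le> t"
  shows "((\<lambda>\<tau>. (f (w \<tau>) - f z) powr (1 - \<mu>)) has_real_derivative
      - ((1 - \<mu>) * ((norm (G (w t)))\<^sup>2 / (f (w t) - f z) powr \<mu>))) (at t)"
proof -
  have "((\<lambda>\<tau>. f (w \<tau>) - f z) has_real_derivative - (G (w t) \<bullet> G (w t)) - 0) (at t)"
    by (intro derivative_intros loss_deriv assms)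
  from DERIV_chain2[OF has_real_derivative_powr[of "f (w t) - f z" "1 - \<mu>"] this]
  have "((\<lambda>\<tau>. (f (w \<tau>) - f z) powr (1 - \<mu>)) has_real_derivative
      (1 - \<mu>) * (f (w t) - f z) powr (1 - \<mu> - 1) * (- (G (w t) \<bullet> G (w t)) - 0)) (at t)"
    using above[OF assms] by simp
  moreover have "(1 - \<mu>) * (f (w t) - f z) powr (1 - \<mu> - 1) * (- (G (w t) \<bullet> G (w t)) - 0)
      = - ((1 - \<mu>) * ((norm (G (w t)))\<^sup>2 / (f (w t) - f z) powr \<mu>))"
    using above[OF assms] by (simp add: powr_minus divide_simps power2_norm_eq_inner)
  ultimately show ?thesis
    by (rule DERIV_cong)
qed

lemma lojasiewicz_gradient_bound:
  assumes "0 \<le> t" "w t \<in> U"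
  shows "norm (G (w t)) \<le> c * ((norm (G (w t)))\<^sup>2 / (f (w t) - f z) powr \<mu>)"
proof -
  define D where "D = f (w t) - f z"
  define g where "g = norm (G (w t))"
  have "0 < D"
    using above[OF assms(1)] by (simp add: D_def)
  have "D powr \<mu> \<le> c * g"
    using loj[OF assms(2)] \<open>0 < D\<close> unfolding loj_pow_def D_def g_def
    by (auto split: if_splits simp: abs_minus_commute)
  then have "g * D powr \<mu> \<le> c * g\<^sup>2"
    using mult_left_mono[of "D powr \<mu>" "c * g" g] by (simp add: g_def power2_eq_square mult_ac)
  then show ?thesis
    using \<open>0 < D\<close> by (simp add: D_def g_def field_simps)
qed

lemma lojasiewicz_arc_length:
  assumes ab: "0 \<le> a" "a \<le> b" and inU: "\<And>t. a < t \<Longrightarrow> t < b \<Longrightarrow> w t \<in> U"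
  shows "norm (w b - w a) \<le> c / (1 - \<mu>) * ((f (w a) - f z) powr (1 - \<mu>) - (f (w b) - f z) powr (1 - \<mu>))"
proof -
  define \<phi> where "\<phi> t = c / (1 - \<mu>) * (f (w t) - f z) powr (1 - \<mu>)" for t
  have \<phi>_deriv: "(\<phi> has_real_derivative - (c * ((norm (G (w t)))\<^sup>2 / (f (w t) - f z) powr \<mu>))) (at t)"
    if "0 \<le> t" for t
    unfolding \<phi>_def using DERIV_cmult[OF desingularized_loss_deriv[OF that], of "c / (1 - \<mu>)"] \<mu>
    by simp
  \<comment> \<open>The projection of \<open>w\<close> onto the direction of \<open>w b - w a\<close> plus \<open>\<phi>\<close> is nonincreasing.\<close>
  define e where "e = sgn (w b - w a)"
  define p where "p t = e \<bullet> w t + \<phi> t" for t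
  have "p b \<le> p a"
  proof (rule DERIV_nonpos_imp_decreasing_open[OF ab(2)])
    fix t assume t: "a < t" "t < b"
    have "(p has_real_derivative e \<bullet> - G (w t) + - (c * ((norm (G (w t)))\<^sup>2 / (f (w t) - f z) powr \<mu>))) (at t)"
      unfolding p_def using t ab
      by (intro DERIV_add \<phi>_deriv bounded_linear.has_vector_derivative[OF bounded_linear_inner_right,
            THEN has_real_derivative_iff_has_vector_derivative[THEN iffD2]] flow) auto
    moreover have "e \<bullet> - G (w t) \<le> norm (G (w t))"
    proof -
      have "e \<bullet> - G (w t) \<le> norm e * norm (G (w t))"
        using norm_cauchy_schwarz[of e "- G (w t)"] by simp
      also have "\<dots> \<le> norm (G (w t))"
        by (cases "w b = w a") (simp_all add: e_def norm_sgn)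
      finally show ?thesis .
    qed
    ultimately show "\<exists>y. (p has_real_derivative y) (at t) \<and> y \<le> 0"
      using lojasiewicz_gradient_bound[of t] t ab inU[OF t] by fastforce
  next
    have "continuous_on {a..b} \<phi>"
      using ab by (auto intro!: continuous_at_imp_continuous_on DERIV_isCont \<phi>_deriv)
    then show "continuous_on {a..b} p"
      unfolding p_def using ab by (intro continuous_intros continuous_on_subset[OF continuous_on_flow]) auto
  qed
  then have "e \<bullet> (w b - w a) \<le> \<phi> a - \<phi> b"
    unfolding p_def by (simp add: inner_diff_right algebra_simps)
  moreover have "e \<bullet> (w b - w a) = norm (w b - w a)"
    by (cases "w b = w a")
      (simp_all add: e_def sgn_div_norm power2_norm_eq_inner[symmetric] power2_eq_square)
  ultimately show ?thesis
    by (simp add: \<phi>_def right_diff_distrib)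
qed

lemma lojasiewicz_trapped:
  assumes r: "ball z r \<subseteq> U" and t0: "0 \<le> t0" "norm (w t0 - z) < r / 2"
    and small: "c / (1 - \<mu>) * (f (w t0) - f z) powr (1 - \<mu>) < r / 2"
    and "t0 \<le> t"
  shows "norm (w t - z) < r"
proof (rule ccontr)
  assume "\<not> norm (w t - z) < r"
  \<comment> \<open>Consider the first exit time \<open>T\<close> from the ball; up to \<open>T\<close> the arc length bound applies.\<close>
  define A where "A = {t0..} \<inter> w -` (- ball z r)"
  have "t \<in> A"
    using \<open>t0 \<le> t\<close> \<open>\<not> norm (w t - z) < r\<close> by (auto simp: A_def dist_norm norm_minus_commute)
  moreover have "closed A"
    unfolding A_def by (rule continuous_closed_preimage[OF continuous_on_flow[OF t0(1)]]) auto
  moreover have bdd: "bdd_below A"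
    unfolding A_def by (rule bdd_belowI[of _ t0]) auto
  ultimately have "Inf A \<in> A"
    using closed_contains_Inf by blast
  define T where "T = Inf A"
  have T: "t0 \<le> T" "r \<le> norm (w T - z)"
    using \<open>Inf A \<in> A\<close> by (auto simp: T_def A_def dist_norm norm_minus_commute)
  have "w \<tau> \<in> U" if "t0 < \<tau>" "\<tau> < T" for \<tau>
  proof -
    have "\<tau> \<notin> A"
      using cInf_lower[OF _ bdd, of \<tau>] that by (auto simp: T_def)
    then show ?thesis
      using that r by (auto simp: A_def)
  qed
  then have "norm (w T - w t0) \<le> c / (1 - \<mu>) * ((f (w t0) - f z) powr (1 - \<mu>) - (f (w T) - f z) powr (1 - \<mu>))"
    using t0(1) T(1) by (intro lojasiewicz_arc_length) auto
  also have "\<dots> \<le> c / (1 - \<mu>) * (f (w t0) - f z) powr (1 - \<mu>)"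
    by (intro mult_left_mono) (use c \<mu> in auto)
  also have "\<dots> < r / 2"
    by (rule small)
  finally have "norm (w T - w t0) + norm (w t0 - z) < r"
    using t0(2) by simp
  then have "norm (w T - z) < r"
    using norm_triangle_lt[of "w T - w t0" "w t0 - z" r] by simp
  then show False
    using T(2) by simp
qed

lemma lojasiewicz_convergence:
  assumes r: "0 < r" "ball z r \<subseteq> U"
    and loss_lim: "((\<lambda>t. f (w t)) \<longlongrightarrow> f z) at_top"
    and accum: "\<And>e T. 0 < e \<Longrightarrow> \<exists>t\<ge>T. norm (w t - z) < e"
  shows "(w \<longlongrightarrow> z) at_top"
proof -
  define \<phi> where "\<phi> t = c / (1 - \<mu>) * (f (w t) - f z) powr (1 - \<mu>)" for t
  have "((\<lambda>t. (f (w t) - f z) powr (1 - \<mu>)) \<longlongrightarrow> 0) at_top"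
    using loss_lim \<mu> above
    by (intro tendsto_zero_powrI LIM_zero) (auto simp: eventually_at_top_linorder less_imp_le intro!: exI[of _ 0])
  have \<phi>_nonneg: "0 \<le> \<phi> t" for t
    unfolding \<phi>_def by (intro mult_nonneg_nonneg divide_nonneg_nonneg) (use c \<mu> in auto)
  from \<open>((\<lambda>t. (f (w t) - f z) powr (1 - \<mu>)) \<longlongrightarrow> 0) at_top\<close>
  have \<phi>_lim: "(\<phi> \<longlongrightarrow> 0) at_top"
    unfolding \<phi>_def using tendsto_mult_right_zero by blast
  then obtain T0 where T0: "\<And>t. T0 \<le> t \<Longrightarrow> \<phi> t < r / 2"
    using order_tendstoD(2)[OF \<phi>_lim, of "r / 2"] r(1) unfolding eventually_at_top_linorder by auto
  obtain t0 where t0: "max T0 0 \<le> t0" "norm (w t0 - z) < r / 2"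
    using accum[of "r / 2" "max T0 0"] r(1) by auto
  have "norm (w t - z) \<le> \<phi> t" if "t0 \<le> t" for t
  proof (rule field_le_epsilon)
    fix e :: real assume "0 < e"
    then obtain t' where t': "t \<le> t'" "norm (w t' - z) < e"
      using accum by blast
    have "w \<tau> \<in> U" if "t < \<tau>" for \<tau>
      using lojasiewicz_trapped[OF r(2) _ t0(2), of \<tau>] T0[of t0] t0(1) \<open>t0 \<le> t\<close> that r(2)
      by (auto simp: \<phi>_def dist_norm norm_minus_commute)
    then have "norm (w t' - w t) \<le> \<phi> t - \<phi> t'"
      unfolding \<phi>_def right_diff_distrib[symmetric]
      using t0(1) \<open>t0 \<le> t\<close> t'(1) by (intro lojasiewicz_arc_length) auto
    also have "\<dots> \<le> \<phi> t"
      using \<phi>_nonneg[of t'] by simp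
    finally show "norm (w t - z) \<le> \<phi> t + e"
      using t'(2) norm_triangle_ineq[of "w t - w t'" "w t' - z"] by (simp add: norm_minus_commute)
  qed
  then have "\<forall>\<^sub>F t in at_top. norm (w t - z) \<le> \<phi> t"
    by (auto simp: eventually_at_top_linorder)
  then show ?thesis
    by (rule LIM_zero_cancel[OF Lim_null_comparison[OF _ \<phi>_lim]])
qed

end

theorem bounded_flow_converges_to_critical_point:
  assumes bounded: "bounded (w ` {0..})" and loj: "\<And>x. lojasiewicz_at f G x"
  shows "\<exists>z. G z = 0 \<and> (w \<longlongrightarrow> z) at_top"
proof -
  obtain z where lower: "\<And>t. 0 \<le> t \<Longrightarrow> f z \<le> f (w t)"
    and loss_lim: "((\<lambda>t. f (w t)) \<longlongrightarrow> f z) at_top"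
    and accum: "\<And>e T. 0 < e \<Longrightarrow> \<exists>t\<ge>T. norm (w t - z) < e"
    using limit_point_of_bounded_flow[OF bounded] by blast
  show ?thesis
  proof (cases "\<exists>t1\<ge>0. f (w t1) = f z")
    case True
    then obtain t1 where "0 \<le> t1" "f (w t1) = f z"
      by blast
    then have lim: "(w \<longlongrightarrow> w t1) at_top"
      using lower by (intro flow_stationary_after) auto
    then have "G (w t1) = 0"
      using lower by (rule critical_point_of_limit)
    with lim show ?thesis
      by blast
  next
    case False
    have above: "f z < f (w t)" if "0 \<le> t" for t
      using lower[OF that] False that by (auto simp: order.strict_iff_order)
    obtain U c \<mu> where U: "open U" "z \<in> U" and c: "0 < c" and \<mu>: "\<mu> < 1"
      and ineq: "\<And>x. x \<in> U \<Longrightarrow> loj_pow \<bar>f z - f x\<bar> \<mu> \<le> c * norm (G x)"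
      using loj[of z] unfolding lojasiewicz_at_def by blast
    obtain r where "0 < r" "ball z r \<subseteq> U"
      using U open_contains_ball by blast
    then have lim: "(w \<longlongrightarrow> z) at_top"
      using lojasiewicz_convergence[OF ineq c \<mu> above] loss_lim accum by blast
    then have "G z = 0"
      using lower by (rule critical_point_of_limit)
    with lim show ?thesis
      by blast
  qed
qed

end

section \<open>Linear convolutional networks\<close>

lemma net_mat_cong:
  assumes "\<And>i n. i \<in> {1..j} \<Longrightarrow> n < k i \<Longrightarrow> F i n = F' i n"
  shows "net_mat d k s F j = net_mat d k s F' j"
  using assms
proof (induction j)
  case (Suc j)
  have "conv_mat (k (Suc j)) (s (Suc j)) (F (Suc j)) = conv_mat (k (Suc j)) (s (Suc j)) (F' (Suc j))"
    unfolding conv_mat_def using Suc.prems[of "Suc j"] by (intro ext) auto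
  then show ?case
    using Suc by simp
qed simp

lemma net_mat_scale:
  "net_mat d k s (\<lambda>i n. a i * F i n) j r c = (\<Prod>i\<in>{1..j}. a i) * net_mat d k s F j r c"
proof (induction j arbitrary: r c)
  case (Suc j)
  have "conv_mat kk ss (\<lambda>n. b * v n) r t = b * conv_mat kk ss v r t" for kk ss b v r t
    unfolding conv_mat_def by simp
  then have "net_mat d k s (\<lambda>i n. a i * F i n) (Suc j) r c
      = (a (Suc j) * (\<Prod>i\<in>{1..j}. a i)) * net_mat d k s F (Suc j) r c"
    by (simp add: mat_mult_def Suc.IH sum_distrib_left mult_ac)
  then show ?case
    by (simp add: prod.cl_ivl_Suc mult.commute)
qed simp

lemma continuous_on_net_mat:
  "continuous_on UNIV (\<lambda>x::real^'n::finite. net_mat d k s (filters_of k pidx x) j r c)"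
proof (induction j arbitrary: r c)
  case (Suc j)
  have "continuous_on UNIV (\<lambda>x::real^'n. conv_mat kk ss (filters_of k pidx x i) r t)" for kk ss i r t
    unfolding conv_mat_def filters_of_def
    by (cases "r * ss \<le> t \<and> t < r * ss + kk") (auto intro!: continuous_intros)
  then show ?case
    unfolding net_mat.simps mat_mult_def by (intro continuous_intros Suc.IH)
qed simp

lemma architecture_layer:
  assumes "architecture N d k s" and "i \<in> {1..N}"
  shows "d (i - 1) = (d i - 1) * s i + k i" and "0 < s i" and "0 < k i" and "0 < d i"
proof -
  have pos: "0 < s i" "0 < k i" "0 < d i"
    and eq: "real (d i) = (real (d (i - 1)) - real (k i)) / real (s i) + 1"
    using assms unfolding architecture_def by auto
  then have "real (d (i - 1)) = (real (d i) - 1) * real (s i) + real (k i)"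
    by (simp add: field_simps)
  then have "real (d (i - 1)) = real ((d i - 1) * s i + k i)"
    using pos by (simp add: of_nat_diff)
  then show "d (i - 1) = (d i - 1) * s i + k i"
    by (simp only: of_nat_eq_iff)
  show "0 < s i" "0 < k i" "0 < d i"
    by (fact pos)+
qed

text \<open>Induction step of the fact that the lowest-order coefficient of a product of nonzero
  polynomials is the product of their lowest-order coefficients, for one convolutional layer.\<close>

lemma conv_mat_mult_leading_entry:
  fixes B :: "nat \<Rightarrow> nat \<Rightarrow> real"
  assumes B0: "\<And>u c. u < m \<Longrightarrow> c < u * S + C \<Longrightarrow> B u c = 0"
    and B1: "\<And>u. u < m \<Longrightarrow> B u (u * S + C) = p"
    and S: "1 \<le> S" and m: "t * ss + kk \<le> m"
    and nz: "\<exists>n<kk. f n \<noteq> 0"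
  defines "\<nu> \<equiv> LEAST n. f n \<noteq> 0"
  shows "\<And>c. c < (t * ss + \<nu>) * S + C \<Longrightarrow> mat_mult m (conv_mat kk ss f) B t c = 0"
    and "mat_mult m (conv_mat kk ss f) B t ((t * ss + \<nu>) * S + C) = f \<nu> * p"
proof -
  define u0 where "u0 = t * ss + \<nu>"
  have f\<nu>: "f \<nu> \<noteq> 0" and \<nu>_le: "\<And>n. f n \<noteq> 0 \<Longrightarrow> \<nu> \<le> n"
    using nz LeastI_ex[of "\<lambda>n. f n \<noteq> 0"] Least_le[of "\<lambda>n. f n \<noteq> 0"] by (auto simp: \<nu>_def)
  have "\<nu> < kk"
    using nz \<nu>_le by (meson order.strict_trans1)
  then have u0: "u0 < m"
    using m by (simp add: u0_def)
  have entry: "conv_mat kk ss f t u = (if t * ss \<le> u \<and> u < t * ss + kk then f (u - t * ss) else 0)" for u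
    by (simp add: conv_mat_def)
  \<comment> \<open>Only the term \<open>u = u0\<close> can contribute up to the column \<open>u0 * S + C\<close>.\<close>
  have vanish: "conv_mat kk ss f t u * B u c = 0"
    if "u < m" "c \<le> u0 * S + C" "u \<noteq> u0 \<or> c < u0 * S + C" for u c
  proof (cases "conv_mat kk ss f t u = 0")
    case False
    then have "u0 \<le> u"
      using \<nu>_le[of "u - t * ss"] by (auto simp: entry u0_def split: if_splits)
    then have "c < u * S + C"
    proof (cases "u = u0")
      case False
      then have "(u0 + 1) * S \<le> u * S"
        using \<open>u0 \<le> u\<close> by (intro mult_le_mono1) simp
      then show ?thesis
        using that(2) S by simp
    qed (use that in simp)
    then show ?thesis
      using B0[OF that(1)] by simp
  qed simp
  show "mat_mult m (conv_mat kk ss f) B t c = 0" if "c < (t * ss + \<nu>) * S + C" for c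
    unfolding mat_mult_def using that vanish by (intro sum.neutral) (auto simp: u0_def)
  have "mat_mult m (conv_mat kk ss f) B t (u0 * S + C)
      = conv_mat kk ss f t u0 * B u0 (u0 * S + C)
        + (\<Sum>u\<in>{..<m} - {u0}. conv_mat kk ss f t u * B u (u0 * S + C))"
    unfolding mat_mult_def using u0 by (intro sum.remove) auto
  also have "(\<Sum>u\<in>{..<m} - {u0}. conv_mat kk ss f t u * B u (u0 * S + C)) = 0"
    using vanish by (intro sum.neutral) auto
  also have "conv_mat kk ss f t u0 * B u0 (u0 * S + C) = f \<nu> * p"
    using \<open>\<nu> < kk\<close> B1[OF u0] by (simp add: entry u0_def)
  finally show "mat_mult m (conv_mat kk ss f) B t ((t * ss + \<nu>) * S + C) = f \<nu> * p"
    by (simp add: u0_def)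
qed

lemma net_mat_leading_entry:
  assumes arch: "architecture N d k s"
    and nz: "\<And>i. i \<in> {1..N} \<Longrightarrow> \<exists>n<k i. F i n \<noteq> 0"
  defines "\<nu> \<equiv> \<lambda>i. LEAST n. F i n \<noteq> 0" and "\<sigma> \<equiv> \<lambda>i. \<Prod>m\<in>{1..<i}. s m"
  shows "j \<le> N \<Longrightarrow> t < d j \<Longrightarrow>
    (\<forall>c < t * \<sigma> (Suc j) + (\<Sum>i\<in>{1..j}. \<nu> i * \<sigma> i). net_mat d k s F j t c = 0) \<and>
    net_mat d k s F j t (t * \<sigma> (Suc j) + (\<Sum>i\<in>{1..j}. \<nu> i * \<sigma> i)) = (\<Prod>i\<in>{1..j}. F i (\<nu> i))"
proof (induction j arbitrary: t)
  case 0
  then show ?case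
    by (simp add: \<sigma>_def)
next
  case (Suc j)
  let ?C = "\<Sum>i\<in>{1..j}. \<nu> i * \<sigma> i"
  have layer: "Suc j \<in> {1..N}"
    using Suc.prems by simp
  have "0 < \<sigma> (Suc j)"
    using architecture_layer(2)[OF arch] Suc.prems unfolding \<sigma>_def by (intro prod_pos) auto
  then have "1 \<le> \<sigma> (Suc j)"
    by simp
  moreover have "t * s (Suc j) + k (Suc j) \<le> d j"
  proof -
    have "t \<le> d (Suc j) - 1"
      using Suc.prems by simp
    then have "t * s (Suc j) \<le> (d (Suc j) - 1) * s (Suc j)"
      by (rule mult_le_mono1)
    then show ?thesis
      using architecture_layer(1)[OF arch layer] by simp
  qed
  moreover have "\<And>u c. u < d j \<Longrightarrow> c < u * \<sigma> (Suc j) + ?C \<Longrightarrow> net_mat d k s F j u c = 0"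
    and "\<And>u. u < d j \<Longrightarrow> net_mat d k s F j u (u * \<sigma> (Suc j) + ?C) = (\<Prod>i\<in>{1..j}. F i (\<nu> i))"
    using Suc.IH Suc.prems by auto
  ultimately have step:
      "\<And>c. c < (t * s (Suc j) + \<nu> (Suc j)) * \<sigma> (Suc j) + ?C \<Longrightarrow> net_mat d k s F (Suc j) t c = 0"
      "net_mat d k s F (Suc j) t ((t * s (Suc j) + \<nu> (Suc j)) * \<sigma> (Suc j) + ?C)
         = F (Suc j) (\<nu> (Suc j)) * (\<Prod>i\<in>{1..j}. F i (\<nu> i))"
    using conv_mat_mult_leading_entry[of "d j" "\<sigma> (Suc j)" ?C "net_mat d k s F j"
        "\<Prod>i\<in>{1..j}. F i (\<nu> i)" t "s (Suc j)" "k (Suc j)" "F (Suc j)", OF _ _ _ _ nz[OF layer]]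
    by (simp_all add: \<nu>_def)
  have col: "(t * s (Suc j) + \<nu> (Suc j)) * \<sigma> (Suc j) + ?C
      = t * \<sigma> (Suc (Suc j)) + (\<Sum>i\<in>{1..Suc j}. \<nu> i * \<sigma> i)"
    by (simp add: \<sigma>_def prod.atLeastLessThan_Suc algebra_simps)
  have "(\<Prod>i\<in>{1..Suc j}. F i (\<nu> i)) = F (Suc j) (\<nu> (Suc j)) * (\<Prod>i\<in>{1..j}. F i (\<nu> i))"
    by (simp add: prod.cl_ivl_Suc)
  then show ?case
    unfolding col[symmetric] using step by (simp only:) blast
qed

lemma net_mat_first_row_nonzero:
  assumes arch: "architecture N d k s" and "1 \<le> N"
    and nz: "\<And>i. i \<in> {1..N} \<Longrightarrow> \<exists>n<k i. F i n \<noteq> 0"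
  shows "\<exists>c < kv N k s. net_mat d k s F N 0 c \<noteq> 0"
proof -
  define \<nu> where "\<nu> i = (LEAST n. F i n \<noteq> 0)" for i
  define \<sigma> where "\<sigma> i = (\<Prod>m\<in>{1..<i}. s m)" for i
  have \<nu>: "F i (\<nu> i) \<noteq> 0" "\<nu> i < k i" if "i \<in> {1..N}" for i
    using nz[OF that] LeastI_ex[of "\<lambda>n. F i n \<noteq> 0"] Least_le[of "\<lambda>n. F i n \<noteq> 0"]
    by (auto simp: \<nu>_def intro: order.strict_trans1)
  have "0 < d N"
    using architecture_layer(4)[OF arch] \<open>1 \<le> N\<close> by simp
  then have "net_mat d k s F N 0 (\<Sum>i\<in>{1..N}. \<nu> i * \<sigma> i) = (\<Prod>i\<in>{1..N}. F i (\<nu> i))"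
    using net_mat_leading_entry[OF arch nz, of N 0] by (simp add: \<nu>_def \<sigma>_def)
  also have "\<dots> \<noteq> 0"
    using \<nu>(1) by simp
  moreover have "(\<Sum>i\<in>{1..N}. \<nu> i * \<sigma> i) < kv N k s"
  proof -
    have split: "{1..N} = insert 1 {2..N}"
      using \<open>1 \<le> N\<close> by auto
    have "(\<Sum>i\<in>{2..N}. \<nu> i * \<sigma> i) \<le> (\<Sum>i\<in>{2..N}. (k i - 1) * \<sigma> i)"
    proof (intro sum_mono mult_right_mono)
      show "\<nu> i \<le> k i - 1" if "i \<in> {2..N}" for i
        using \<nu>(2)[of i] that by auto
    qed simp
    moreover have "\<nu> 1 * \<sigma> 1 < k 1"
      using \<nu>(2)[of 1] \<open>1 \<le> N\<close> by (simp add: \<sigma>_def)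
    ultimately show ?thesis
      unfolding split kv_def \<sigma>_def by simp
  qed
  ultimately show ?thesis
    by auto
qed

definition layer_offset :: "(nat \<Rightarrow> nat) \<Rightarrow> nat \<Rightarrow> nat" where
  "layer_offset k i = (\<Sum>j\<in>{1..<i}. k j)"

lemma layer_offset_Suc: "1 \<le> i \<Longrightarrow> layer_offset k (Suc i) = layer_offset k i + k i"
  by (simp add: layer_offset_def sum.atLeastLessThan_Suc)

lemma layer_offset_mono: "i \<le> j \<Longrightarrow> layer_offset k i \<le> layer_offset k j"
  unfolding layer_offset_def by (rule sum_mono2) auto

lemma layer_offset_kbar: "layer_offset k (Suc N) = kbar N k"
  by (simp add: layer_offset_def kbar_def atLeastLessThanSuc_atLeastAtMost)

lemma sum_layer_blocks:
  "(\<Sum>p<layer_offset k (Suc N). g p) = (\<Sum>i\<in>{1..N}. \<Sum>p\<in>{layer_offset k i..<layer_offset k (Suc i)}. g p)"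
proof (induction N)
  case (Suc N)
  have "(\<Sum>p<layer_offset k (Suc (Suc N)). g p)
      = (\<Sum>p<layer_offset k (Suc N). g p) + (\<Sum>p\<in>{layer_offset k (Suc N)..<layer_offset k (Suc (Suc N))}. g p)"
    unfolding lessThan_atLeast0 by (rule sum.atLeastLessThan_concat[symmetric]) (auto intro: layer_offset_mono)
  then show ?case
    using Suc.IH by simp
qed (simp add: layer_offset_def)

lemma continuous_on_final_filter_l1: "continuous_on A (final_filter_l1 N d k s pidx)"
  unfolding final_filter_l1_def final_filter_def Pi_net_def
  by (intro continuous_intros continuous_on_subset[OF continuous_on_net_mat] subset_UNIV)

locale layer_coordinates =
  fixes N :: nat and k :: "nat \<Rightarrow> nat" and pidx :: "nat \<Rightarrow> 'n::finite"
  assumes pidx_bij: "bij_betw pidx {..<kbar N k} UNIV"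
begin

definition layer_coords :: "nat \<Rightarrow> 'n set" where
  "layer_coords i = pidx ` {layer_offset k i..<layer_offset k (Suc i)}"

lemma layer_block_subset: "i \<in> {1..N} \<Longrightarrow> {layer_offset k i..<layer_offset k (Suc i)} \<subseteq> {..<kbar N k}"
  using layer_offset_mono[of "Suc i" "Suc N" k] by (auto simp: layer_offset_kbar)

lemma depth_pos: "1 \<le> N"
  using pidx_bij by (cases N) (auto simp: kbar_def bij_betw_def)

lemma pidx_in_layer_coords: "i \<in> {1..N} \<Longrightarrow> n < k i \<Longrightarrow> pidx (layer_offset k i + n) \<in> layer_coords i"
  using layer_offset_Suc[of i k] by (auto simp: layer_coords_def)

lemma layer_coords_unique:
  assumes "i \<in> {1..N}" "i' \<in> {1..N}" "j \<in> layer_coords i" "j \<in> layer_coords i'"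
  shows "i = i'"
proof -
  obtain p p' where p: "p \<in> {layer_offset k i..<layer_offset k (Suc i)}" "j = pidx p"
    and p': "p' \<in> {layer_offset k i'..<layer_offset k (Suc i')}" "j = pidx p'"
    using assms(3,4) by (auto simp: layer_coords_def)
  have "p = p'"
  proof (rule inj_onD[OF bij_betw_imp_inj_on[OF pidx_bij]])
    show "pidx p = pidx p'"
      using p(2) p'(2) by simp
    show "p \<in> {..<kbar N k}" "p' \<in> {..<kbar N k}"
      using p(1) p'(1) layer_block_subset[OF assms(1)] layer_block_subset[OF assms(2)] by auto
  qed
  show ?thesis
  proof (rule ccontr)
    assume "i \<noteq> i'"
    then have "Suc i \<le> i' \<or> Suc i' \<le> i"
      by linarith
    then show False
      using layer_offset_mono[of "Suc i" i' k] layer_offset_mono[of "Suc i'" i k] p p' \<open>p = p'\<close> by auto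
  qed
qed

definition scale_layers :: "(nat \<Rightarrow> real) \<Rightarrow> real^'n \<Rightarrow> real^'n" where
  "scale_layers a x = (\<chi> j. (\<Prod>i\<in>{1..N}. if j \<in> layer_coords i then a i else 1) * x $ j)"

lemma scale_layers_nth:
  assumes "i \<in> {1..N}" "j \<in> layer_coords i"
  shows "scale_layers a x $ j = a i * x $ j"
proof -
  have "(\<Prod>m\<in>{1..N}. if j \<in> layer_coords m then a m else 1) = (\<Prod>m\<in>{1..N}. if m = i then a i else 1)"
  proof (rule prod.cong)
    show "(if j \<in> layer_coords m then a m else 1) = (if m = i then a i else 1)" if "m \<in> {1..N}" for m
    proof -
      have "m \<noteq> i \<Longrightarrow> j \<notin> layer_coords m"
        using layer_coords_unique[OF that assms(1) _ assms(2)] by blast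
      then show ?thesis
        using assms(2) by auto
    qed
  qed simp
  also have "\<dots> = a i"
    using assms(1) by (simp add: prod.delta)
  finally show ?thesis
    by (simp add: scale_layers_def)
qed

lemma Pi_net_scale_layers:
  "Pi_net N d k s pidx (scale_layers a x) = (\<lambda>r c. (\<Prod>i\<in>{1..N}. a i) * Pi_net N d k s pidx x r c)"
proof -
  have "filters_of k pidx (scale_layers a x) i n = a i * filters_of k pidx x i n"
    if "i \<in> {1..N}" "n < k i" for i n
    using scale_layers_nth[OF that(1) pidx_in_layer_coords[OF that]] by (simp add: filters_of_def layer_offset_def)
  then have "net_mat d k s (filters_of k pidx (scale_layers a x)) N
      = net_mat d k s (\<lambda>i n. a i * filters_of k pidx x i n) N"
    by (intro net_mat_cong) auto
  then show ?thesis
    by (simp add: Pi_net_def net_mat_scale fun_eq_iff)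
qed

lemma final_filter_l1_scale_layers:
  "final_filter_l1 N d k s pidx (scale_layers a x) = \<bar>\<Prod>i\<in>{1..N}. a i\<bar> * final_filter_l1 N d k s pidx x"
  by (simp add: final_filter_l1_def final_filter_def Pi_net_scale_layers abs_mult sum_distrib_left)

definition layer_part :: "nat \<Rightarrow> real^'n \<Rightarrow> real^'n" where
  "layer_part i x = (\<chi> j. if j \<in> layer_coords i then x $ j else 0)"

definition layer_sqnorm :: "nat \<Rightarrow> real^'n \<Rightarrow> real" where
  "layer_sqnorm i x = (\<Sum>j\<in>layer_coords i. (x $ j)\<^sup>2)"

lemma inner_layer_part: "y \<bullet> layer_part i x = (\<Sum>j\<in>layer_coords i. y $ j * x $ j)"
  by (simp add: layer_part_def inner_vec_def if_distrib sum.If_cases)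

lemma layer_sqnorm_nonneg: "0 \<le> layer_sqnorm i x"
  by (simp add: layer_sqnorm_def sum_nonneg)

lemma continuous_on_layer_sqnorm: "continuous_on UNIV (layer_sqnorm i)"
  unfolding layer_sqnorm_def by (intro continuous_intros)

lemma layer_sqnorm_scale_layers: "i \<in> {1..N} \<Longrightarrow> layer_sqnorm i (scale_layers a x) = (a i)\<^sup>2 * layer_sqnorm i x"
  by (simp add: layer_sqnorm_def scale_layers_nth sum_distrib_left power_mult_distrib)

lemma norm_power2_eq_sum_layer_sqnorm: "(norm x)\<^sup>2 = (\<Sum>i\<in>{1..N}. layer_sqnorm i x)"
proof -
  have "(norm x)\<^sup>2 = (\<Sum>j\<in>UNIV. (x $ j)\<^sup>2)"
    unfolding power2_norm_eq_inner inner_vec_def by (simp add: power2_eq_square)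
  also have "\<dots> = (\<Sum>p<kbar N k. (x $ pidx p)\<^sup>2)"
    by (rule sum.reindex_bij_betw[OF pidx_bij, symmetric])
  also have "\<dots> = (\<Sum>i\<in>{1..N}. \<Sum>p\<in>{layer_offset k i..<layer_offset k (Suc i)}. (x $ pidx p)\<^sup>2)"
    unfolding layer_offset_kbar[symmetric] sum_layer_blocks ..
  also have "\<dots> = (\<Sum>i\<in>{1..N}. layer_sqnorm i x)"
    unfolding layer_sqnorm_def layer_coords_def
    using inj_on_subset[OF bij_betw_imp_inj_on[OF pidx_bij] layer_block_subset]
    by (intro sum.cong refl, subst sum.reindex) auto
  finally show ?thesis .
qed

lemma layer_sqnorm_has_derivative:
  assumes "(u has_vector_derivative v) (at t)"
  shows "((\<lambda>\<tau>. layer_sqnorm i (u \<tau>)) has_real_derivative 2 * (v \<bullet> layer_part i (u t))) (at t)"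
proof -
  have "((\<lambda>\<tau>. u \<tau> $ j) has_real_derivative v $ j) (at t)" for j
    using bounded_linear.has_vector_derivative[OF bounded_linear_vec_nth assms]
    by (simp add: has_real_derivative_iff_has_vector_derivative)
  then have "((\<lambda>\<tau>. layer_sqnorm i (u \<tau>)) has_real_derivative (\<Sum>j\<in>layer_coords i. 2 * (u t $ j) * (v $ j))) (at t)"
    unfolding layer_sqnorm_def by (auto intro!: derivative_eq_intros simp: mult_ac)
  then show ?thesis
    by (simp add: inner_layer_part sum_distrib_left mult_ac)
qed

lemma scale_single_layer:
  assumes "i \<in> {1..N}"
  shows "x + (\<tau> - 1) *\<^sub>R layer_part i x = scale_layers (\<lambda>m. if m = i then \<tau> else 1) x"
proof -
  have "(x + (\<tau> - 1) *\<^sub>R layer_part i x) $ j = scale_layers (\<lambda>m. if m = i then \<tau> else 1) x $ j" for j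
  proof (cases "j \<in> layer_coords i")
    case True
    then show ?thesis
      using scale_layers_nth[OF assms True] by (simp add: layer_part_def algebra_simps)
  next
    case False
    have "(\<Prod>m\<in>{1..N}. if j \<in> layer_coords m then if m = i then \<tau> else 1 else 1) = 1"
      using False by (intro prod.neutral) auto
    then show ?thesis
      using False by (simp add: layer_part_def scale_layers_def)
  qed
  then show ?thesis
    by (simp add: vec_eq_iff)
qed

text \<open>Moving along \<open>\<tau> \<mapsto> x + (\<tau> - 1) *\<^sub>R layer_part i x\<close> multiplies \<open>\<Pi>\<close> by \<open>\<tau>\<close>, whichever
  layer \<open>i\<close> is rescaled; comparing the derivatives at \<open>\<tau> = 1\<close> gives the claim.\<close>

lemma gradient_layer_part_eq:
  assumes grad: "(\<Phi> has_derivative (\<lambda>h. g \<bullet> h)) (at x)"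
    and factor: "\<And>y. \<Phi> y = \<psi> (Pi_net N d k s pidx y)"
    and i: "i \<in> {1..N}" and i': "i' \<in> {1..N}"
  shows "g \<bullet> layer_part i x = g \<bullet> layer_part i' x"
proof -
  have line: "\<Phi> (x + (\<tau> - 1) *\<^sub>R layer_part i x) = \<psi> (\<lambda>r c. \<tau> * Pi_net N d k s pidx x r c)"
    if "i \<in> {1..N}" for i \<tau>
    using that by (simp add: factor scale_single_layer Pi_net_scale_layers prod.delta)
  have deriv: "((\<lambda>\<tau>. \<Phi> (x + (\<tau> - 1) *\<^sub>R layer_part i x)) has_real_derivative g \<bullet> layer_part i x) (at 1)" for i
    by (rule gradient_chain_rule) (use grad in \<open>auto intro!: derivative_eq_intros\<close>)
  show ?thesis
    using deriv[of i] deriv[of i'] unfolding line[OF i] line[OF i'] by (rule DERIV_unique)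
qed

lemma layer_balance_conserved:
  assumes grad: "\<And>x. (\<Phi> has_derivative (\<lambda>h. G x \<bullet> h)) (at x)"
    and factor: "\<And>y. \<Phi> y = \<psi> (Pi_net N d k s pidx y)"
    and flow: "\<And>t. t \<in> {0..T} \<Longrightarrow> (w has_vector_derivative - G (w t)) (at t)"
    and "0 \<le> T" and i: "i \<in> {1..N}" and i': "i' \<in> {1..N}"
  shows "layer_sqnorm i (w T) - layer_sqnorm i' (w T) = layer_sqnorm i (w 0) - layer_sqnorm i' (w 0)"
proof -
  let ?b = "\<lambda>t. layer_sqnorm i (w t) - layer_sqnorm i' (w t)"
  have deriv: "(?b has_real_derivative 0) (at t)" if "t \<in> {0..T}" for t
  proof -
    have "(?b has_real_derivative
        2 * (- G (w t) \<bullet> layer_part i (w t)) - 2 * (- G (w t) \<bullet> layer_part i' (w t))) (at t)"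
      by (intro DERIV_diff layer_sqnorm_has_derivative flow that)
    then show ?thesis
      using gradient_layer_part_eq[OF grad factor i i'] by simp
  qed
  show ?thesis
  proof (cases "T = 0")
    case False
    then have "0 < T"
      using \<open>0 \<le> T\<close> by simp
    have "continuous_on {0..T} ?b"
      by (auto intro!: continuous_at_imp_continuous_on DERIV_isCont deriv)
    then show ?thesis
      by (rule DERIV_isconst_end[OF \<open>0 < T\<close>]) (auto intro: deriv)
  qed simp
qed

lemma final_filter_l1_pos:
  assumes arch: "architecture N d k s"
    and nz: "\<And>i. i \<in> {1..N} \<Longrightarrow> layer_sqnorm i x \<noteq> 0"
  shows "0 < final_filter_l1 N d k s pidx x"
proof -
  have "\<exists>n<k i. filters_of k pidx x i n \<noteq> 0" if i: "i \<in> {1..N}" for i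
  proof (rule ccontr)
    assume "\<not> (\<exists>n<k i. filters_of k pidx x i n \<noteq> 0)"
    then have "x $ j = 0" if j: "j \<in> layer_coords i" for j
    proof -
      obtain p where "p \<in> {layer_offset k i..<layer_offset k (Suc i)}" "j = pidx p"
        using j unfolding layer_coords_def by blast
      moreover have "p - layer_offset k i < k i"
        using calculation layer_offset_Suc[of i k] i by auto
      ultimately show ?thesis
        using \<open>\<not> (\<exists>n<k i. filters_of k pidx x i n \<noteq> 0)\<close>
        by (force simp: filters_of_def layer_offset_def)
    qed
    then have "layer_sqnorm i x = 0"
      by (simp add: layer_sqnorm_def)
    then show False
      using nz[OF i] by simp
  qed
  then obtain c where c: "c < kv N k s" "net_mat d k s (filters_of k pidx x) N 0 c \<noteq> 0"
    using net_mat_first_row_nonzero[OF arch depth_pos] by blast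
  then have "0 < \<bar>final_filter N d k s pidx x c\<bar>"
    by (simp add: final_filter_def Pi_net_def)
  also have "\<dots> \<le> final_filter_l1 N d k s pidx x"
    unfolding final_filter_l1_def using c(1) by (intro member_le_sum) auto
  finally show ?thesis .
qed

lemma final_filter_l1_normalize:
  assumes nz: "\<And>i. i \<in> {1..N} \<Longrightarrow> layer_sqnorm i x \<noteq> 0"
  defines "a \<equiv> \<lambda>i. 1 / sqrt (layer_sqnorm i x)"
  shows "\<forall>i\<in>{1..N}. layer_sqnorm i (scale_layers a x) = 1"
    and "final_filter_l1 N d k s pidx x
      = (\<Prod>i\<in>{1..N}. sqrt (layer_sqnorm i x)) * final_filter_l1 N d k s pidx (scale_layers a x)"
proof -
  have pos: "0 < layer_sqnorm i x" if "i \<in> {1..N}" for i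
    using nz[OF that] layer_sqnorm_nonneg[of i x] by simp
  show "\<forall>i\<in>{1..N}. layer_sqnorm i (scale_layers a x) = 1"
  proof
    fix i assume "i \<in> {1..N}"
    with pos[OF this] show "layer_sqnorm i (scale_layers a x) = 1"
      by (simp add: layer_sqnorm_scale_layers a_def power_divide)
  qed
  have "(\<Prod>i\<in>{1..N}. sqrt (layer_sqnorm i x)) * (\<Prod>i\<in>{1..N}. a i) = (\<Prod>i\<in>{1..N}. sqrt (layer_sqnorm i x) * a i)"
    by (simp add: prod.distrib)
  also have "\<dots> = 1"
  proof (rule prod.neutral, rule ballI)
    fix i assume "i \<in> {1..N}"
    then show "sqrt (layer_sqnorm i x) * a i = 1"
      using pos[of i] by (simp add: a_def)
  qed
  moreover have "0 \<le> (\<Prod>i\<in>{1..N}. a i)"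
    unfolding a_def by (intro prod_nonneg) (simp add: layer_sqnorm_nonneg)
  ultimately have "(\<Prod>i\<in>{1..N}. sqrt (layer_sqnorm i x)) * \<bar>\<Prod>i\<in>{1..N}. a i\<bar> = 1"
    by (simp add: abs_of_nonneg)
  then show "final_filter_l1 N d k s pidx x
      = (\<Prod>i\<in>{1..N}. sqrt (layer_sqnorm i x)) * final_filter_l1 N d k s pidx (scale_layers a x)"
    by (simp add: final_filter_l1_scale_layers mult.assoc[symmetric])
qed

lemma compact_unit_layers: "compact {x. \<forall>i\<in>{1..N}. layer_sqnorm i x = 1}"
proof -
  have "closed {x. \<forall>i\<in>{1..N}. layer_sqnorm i x = 1}"
    unfolding Ball_def Collect_all_eq
    by (intro closed_INT ballI closed_Collect_imp closed_Collect_eq continuous_on_layer_sqnorm)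
      (auto intro: continuous_on_const)
  moreover have "norm x \<le> sqrt (real N)" if "\<forall>i\<in>{1..N}. layer_sqnorm i x = 1" for x
    using that norm_power2_eq_sum_layer_sqnorm[of x] by (simp add: real_le_rsqrt)
  then have "bounded {x. \<forall>i\<in>{1..N}. layer_sqnorm i x = 1}"
    unfolding bounded_iff by blast
  ultimately show ?thesis
    by (simp add: compact_eq_bounded_closed)
qed

lemma final_filter_l1_min_on_unit_layers:
  assumes arch: "architecture N d k s"
  obtains m where "0 < m" "\<And>y. \<forall>i\<in>{1..N}. layer_sqnorm i y = 1 \<Longrightarrow> m \<le> final_filter_l1 N d k s pidx y"
proof (cases "{x. \<forall>i\<in>{1..N}. layer_sqnorm i x = 1} = {}")
  case False
  then obtain y0 where "\<forall>i\<in>{1..N}. layer_sqnorm i y0 = 1"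
    "\<And>y. \<forall>i\<in>{1..N}. layer_sqnorm i y = 1 \<Longrightarrow> final_filter_l1 N d k s pidx y0 \<le> final_filter_l1 N d k s pidx y"
    using continuous_attains_inf[OF compact_unit_layers False continuous_on_final_filter_l1[of _ N d k s pidx]]
    by auto
  moreover have "0 < final_filter_l1 N d k s pidx y0"
    using calculation(1) by (intro final_filter_l1_pos[OF arch]) auto
  ultimately show ?thesis
    using that by blast
next
  case True
  then show ?thesis
    by (intro that[of 1]) auto
qed

text \<open>By homogeneity it suffices to bound \<open>\<parallel>\<pi>(w)\<parallel>\<^sub>1\<close> from below on the compact set of
  parameters whose layers all have norm one, where it is positive.\<close>

lemma final_filter_l1_lower_bound:
  assumes arch: "architecture N d k s"
  obtains m where "0 < m" "\<And>x. m * (\<Prod>i\<in>{1..N}. sqrt (layer_sqnorm i x)) \<le> final_filter_l1 N d k s pidx x"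
proof -
  obtain m where m: "0 < m" "\<And>y. \<forall>i\<in>{1..N}. layer_sqnorm i y = 1 \<Longrightarrow> m \<le> final_filter_l1 N d k s pidx y"
    using final_filter_l1_min_on_unit_layers[OF arch] by blast
  have "m * (\<Prod>i\<in>{1..N}. sqrt (layer_sqnorm i x)) \<le> final_filter_l1 N d k s pidx x" for x
  proof (cases "\<forall>i\<in>{1..N}. layer_sqnorm i x \<noteq> 0")
    case True
    let ?y = "scale_layers (\<lambda>i. 1 / sqrt (layer_sqnorm i x)) x"
    have "m \<le> final_filter_l1 N d k s pidx ?y"
      using final_filter_l1_normalize(1)[of x] True by (intro m(2)) auto
    moreover have "0 \<le> (\<Prod>i\<in>{1..N}. sqrt (layer_sqnorm i x))"
      by (intro prod_nonneg) (simp add: layer_sqnorm_nonneg)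
    ultimately have "m * (\<Prod>i\<in>{1..N}. sqrt (layer_sqnorm i x))
        \<le> final_filter_l1 N d k s pidx ?y * (\<Prod>i\<in>{1..N}. sqrt (layer_sqnorm i x))"
      by (rule mult_right_mono)
    then show ?thesis
      using final_filter_l1_normalize(2)[of x] True by (simp add: mult.commute)
  next
    case False
    then have "(\<Prod>i\<in>{1..N}. sqrt (layer_sqnorm i x)) = 0"
      by auto
    then have "m * (\<Prod>i\<in>{1..N}. sqrt (layer_sqnorm i x)) = 0"
      by (simp only: mult_zero_right)
    moreover have "0 \<le> final_filter_l1 N d k s pidx x"
      by (simp add: final_filter_l1_def sum_nonneg)
    ultimately show ?thesis
      by linarith
  qed
  with m(1) show ?thesis
    using that by blast
qed

lemma sqrt_layer_sqnorm_le_prod: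
  assumes "\<And>i. i \<in> {1..N} \<Longrightarrow> 1 \<le> layer_sqnorm i x"
  shows "sqrt (layer_sqnorm 1 x) \<le> (\<Prod>i\<in>{1..N}. sqrt (layer_sqnorm i x))"
proof -
  have "1 \<le> (\<Prod>i\<in>{1..N} - {1}. sqrt (layer_sqnorm i x))"
    using assms by (intro prod_ge_1) auto
  then have "sqrt (layer_sqnorm 1 x) \<le> sqrt (layer_sqnorm 1 x) * (\<Prod>i\<in>{1..N} - {1}. sqrt (layer_sqnorm i x))"
    using layer_sqnorm_nonneg[of 1 x] mult_left_mono[of 1 _ "sqrt (layer_sqnorm 1 x)"] by simp
  also have "\<dots> = (\<Prod>i\<in>{1..N}. sqrt (layer_sqnorm i x))"
    using depth_pos by (intro prod.remove[symmetric]) auto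
  finally show ?thesis .
qed

lemma norm_bound_of_layer_balance:
  assumes arch: "architecture N d k s"
  obtains R where "\<And>x. (\<And>i. i \<in> {1..N} \<Longrightarrow> \<bar>layer_sqnorm i x - layer_sqnorm 1 x\<bar> \<le> Q) \<Longrightarrow>
      final_filter_l1 N d k s pidx x \<le> M \<Longrightarrow> norm x \<le> R"
proof -
  obtain m where m: "0 < m" "\<And>x. m * (\<Prod>i\<in>{1..N}. sqrt (layer_sqnorm i x)) \<le> final_filter_l1 N d k s pidx x"
    using final_filter_l1_lower_bound[OF arch] by blast
  define A where "A = Q + 1 + (M / m)\<^sup>2"
  show ?thesis
  proof (rule that)
    fix x
    assume balance: "\<And>i. i \<in> {1..N} \<Longrightarrow> \<bar>layer_sqnorm i x - layer_sqnorm 1 x\<bar> \<le> Q"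
      and ff: "final_filter_l1 N d k s pidx x \<le> M"
    have first: "layer_sqnorm 1 x \<le> A"
    proof (rule ccontr)
      assume "\<not> layer_sqnorm 1 x \<le> A"
      \<comment> \<open>Then all layers are large, so \<open>\<parallel>\<pi>(w)\<parallel>\<^sub>1\<close> would exceed \<open>M\<close>.\<close>
      then have big: "Q + 1 + (M / m)\<^sup>2 < layer_sqnorm 1 x"
        by (simp add: A_def)
      have "1 \<le> layer_sqnorm i x" if "i \<in> {1..N}" for i
        using balance[OF that] big zero_le_power2[of "M / m"] unfolding abs_le_iff by linarith
      moreover have "M / m < sqrt (layer_sqnorm 1 x)"
        using big balance[of 1] depth_pos by (intro real_less_rsqrt) auto
      ultimately have "M / m < (\<Prod>i\<in>{1..N}. sqrt (layer_sqnorm i x))"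
        using sqrt_layer_sqnorm_le_prod by fastforce
      then have "M < m * (\<Prod>i\<in>{1..N}. sqrt (layer_sqnorm i x))"
        using m(1) by (simp add: field_simps)
      then show False
        using m(2)[of x] ff by simp
    qed
    have "(norm x)\<^sup>2 \<le> (\<Sum>i\<in>{1..N}. A + Q)"
      unfolding norm_power2_eq_sum_layer_sqnorm
      using balance first by (intro sum_mono) (fastforce simp: abs_le_iff)
    then show "norm x \<le> sqrt (real N * (A + Q))"
      by (simp add: real_le_rsqrt)
  qed
qed

text \<open>Along the flow the loss decreases and the differences of the squared layer norms are
  conserved, so the hypotheses of the previous lemma hold with constants taken at time 0.\<close>

lemma norm_bound_along_gradient_flow:
  assumes arch: "architecture N d k s"
    and grad: "\<And>x. (\<Phi> has_derivative (\<lambda>h. G x \<bullet> h)) (at x)"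
    and factor: "\<And>y. \<Phi> y = \<psi> (Pi_net N d k s pidx y)"
    and g: "mono g" "\<And>x. final_filter_l1 N d k s pidx x \<le> g (\<Phi> x)"
  obtains R where "\<And>t. 0 \<le> t \<Longrightarrow> (\<And>\<tau>. \<tau> \<in> {0..t} \<Longrightarrow> (w has_vector_derivative - G (w \<tau>)) (at \<tau>)) \<Longrightarrow>
      norm (w t) \<le> R"
proof -
  define Q where "Q = (\<Sum>i\<in>{1..N}. \<bar>layer_sqnorm i (w 0) - layer_sqnorm 1 (w 0)\<bar>)"
  obtain R where R: "\<And>x. (\<And>i. i \<in> {1..N} \<Longrightarrow> \<bar>layer_sqnorm i x - layer_sqnorm 1 x\<bar> \<le> Q) \<Longrightarrow>
      final_filter_l1 N d k s pidx x \<le> g (\<Phi> (w 0)) \<Longrightarrow> norm x \<le> R"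
    using norm_bound_of_layer_balance[OF arch] by blast
  show ?thesis
  proof (rule that)
    fix t :: real
    assume t: "0 \<le> t" and flow: "\<And>\<tau>. \<tau> \<in> {0..t} \<Longrightarrow> (w has_vector_derivative - G (w \<tau>)) (at \<tau>)"
    show "norm (w t) \<le> R"
    proof (rule R)
      show "\<bar>layer_sqnorm i (w t) - layer_sqnorm 1 (w t)\<bar> \<le> Q" if "i \<in> {1..N}" for i
        using layer_balance_conserved[OF grad factor flow t that, of 1] depth_pos that
        unfolding Q_def by (auto intro: member_le_sum)
      have "final_filter_l1 N d k s pidx (w t) \<le> g (\<Phi> (w t))"
        by (rule g(2))
      also have "\<dots> \<le> g (\<Phi> (w 0))"
        using loss_antimono_along_flow[OF grad flow t] by (rule monoD[OF g(1)])
      finally show "final_filter_l1 N d k s pidx (w t) \<le> g (\<Phi> (w 0))" .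
    qed
  qed
qed

end

lemma train_loss_factors:
  "\<exists>\<psi>. \<forall>x. train_loss N d k s pidx oidx l m X Y x = \<psi> (Pi_net N d k s pidx x)"
  by (auto simp: train_loss_def net_out_def)

lemma train_loss_gradient_flow_bounded:
  assumes arch: "architecture N d k s" and pidx: "bij_betw pidx {..<kbar N k} UNIV"
    and grad: "\<And>x. (train_loss N d k s pidx oidx l m X Y has_derivative (\<lambda>h. G x \<bullet> h)) (at x)"
    and g: "mono g" "\<And>x. final_filter_l1 N d k s pidx x \<le> g (train_loss N d k s pidx oidx l m X Y x)"
  obtains R where "\<And>t. 0 \<le> t \<Longrightarrow> (\<And>\<tau>. \<tau> \<in> {0..t} \<Longrightarrow> (w has_vector_derivative - G (w \<tau>)) (at \<tau>)) \<Longrightarrow>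
      norm (w t) \<le> R"
proof -
  interpret layer_coordinates N k pidx
    by unfold_locales (rule pidx)
  obtain \<psi> where "\<And>x. train_loss N d k s pidx oidx l m X Y x = \<psi> (Pi_net N d k s pidx x)"
    using train_loss_factors by blast
  from norm_bound_along_gradient_flow[OF arch grad this g] that show ?thesis
    by blast
qed

section \<open>The gradient flow of the training loss\<close>

lemma lipschitz_on_cball_of_continuous_derivative:
  fixes G :: "'a::euclidean_space \<Rightarrow> 'b::real_normed_vector"
  assumes deriv: "\<And>x. (G has_derivative blinfun_apply (G' x)) (at x)" and cont: "continuous_on UNIV G'"
  shows "\<exists>L. L-lipschitz_on (cball 0 R) G"
proof -
  have "bounded (G' ` cball 0 R)"
    by (intro compact_imp_bounded compact_continuous_image continuous_on_subset[OF cont] compact_cball) auto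
  then obtain B where B: "0 < B" "\<And>x. x \<in> cball 0 R \<Longrightarrow> norm (G' x) \<le> B"
    unfolding bounded_pos by auto
  have "B-lipschitz_on (cball 0 R) G"
    by (rule bounded_derivative_imp_lipschitz[OF has_derivative_at_withinI[OF deriv] convex_cball])
      (use B in \<open>auto simp: norm_blinfun.rep_eq[symmetric]\<close>)
  then show ?thesis
    by blast
qed

lemma grad_flow_sol_iff_ode_solution: "grad_flow_sol G w0 I w \<longleftrightarrow> ode_solution (\<lambda>x. - G x) w0 I w"
  by (simp add: grad_flow_sol_def ode_solution_def)

theorem theorem3p4:
  fixes N :: nat and d k s :: "nat \<Rightarrow> nat"
    and pidx :: "nat \<Rightarrow> 'n::finite" and oidx :: "nat \<Rightarrow> 'o::finite"
    and m :: nat and X :: "nat \<Rightarrow> nat \<Rightarrow> real" and Y :: "nat \<Rightarrow> real^'o"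
    and l :: "(real^'o) \<times> (real^'o) \<Rightarrow> real"
    and G :: "real^'n \<Rightarrow> real^'n" and w0 :: "real^'n"
  assumes arch: "architecture N d k s"
    and pidx: "bij_betw pidx {..<kbar N k} UNIV"
    and oidx: "bij_betw oidx {..<d N} UNIV"
    and l_diff: "\<And>p. l differentiable (at p)"
    and grad: "\<And>x. (train_loss N d k s pidx oidx l m X Y has_derivative (\<lambda>h. G x \<bullet> h)) (at x)"
    and C2: "\<exists>G' :: real^'n \<Rightarrow> ((real^'n) \<Rightarrow>\<^sub>L (real^'n)).
               (\<forall>x. (G has_derivative blinfun_apply (G' x)) (at x)) \<and> continuous_on UNIV G'"
    and loj: "\<And>x. lojasiewicz_at (train_loss N d k s pidx oidx l m X Y) G x"
  shows "\<exists>I w.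
     open I \<and> is_interval I \<and> grad_flow_sol G w0 I w \<and>
     (\<forall>J v. open J \<and> is_interval J \<and> grad_flow_sol G w0 J v \<longrightarrow>
            J \<subseteq> I \<and> (\<forall>t\<in>J. v t = w t)) \<and>
     ((\<exists>g :: real \<Rightarrow> real. mono g \<and> (\<forall>t. 0 \<le> g t) \<and>
          (\<forall>x. final_filter_l1 N d k s pidx x \<le> g (train_loss N d k s pidx oidx l m X Y x)))
      \<longrightarrow> {0..} \<subseteq> I \<and> bounded (w ` {0..}) \<and>
          (\<exists>z. G z = 0 \<and> (w \<longlongrightarrow> z) at_top))"
proof -
  let ?L = "train_loss N d k s pidx oidx l m X Y"
  obtain G' where G': "\<And>x. (G has_derivative blinfun_apply (G' x)) (at x)" "continuous_on UNIV G'"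
    using C2 by blast
  have lip: "\<exists>L. L-lipschitz_on (cball 0 R) (\<lambda>x. - G x)" for R
    using lipschitz_on_cball_of_continuous_derivative[OF G'] lipschitz_on_minus by blast
  obtain I w where max: "maximal_ode_solution (\<lambda>x. - G x) w0 I w"
    using ode_maximal_solution_exists[OF lip] by blast
  then have sol: "ode_solution (\<lambda>x. - G x) w0 I w" "is_interval I"
    by (simp_all add: maximal_ode_solution_def)
  show ?thesis
  proof (intro exI[of _ I] exI[of _ w] conjI impI)
    show "open I" "is_interval I" "grad_flow_sol G w0 I w"
      "\<forall>J v. open J \<and> is_interval J \<and> grad_flow_sol G w0 J v \<longrightarrow> J \<subseteq> I \<and> (\<forall>t\<in>J. v t = w t)"
      using max unfolding maximal_ode_solution_def grad_flow_sol_iff_ode_solution by blast+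
    assume "\<exists>g :: real \<Rightarrow> real. mono g \<and> (\<forall>t. 0 \<le> g t) \<and> (\<forall>x. final_filter_l1 N d k s pidx x \<le> g (?L x))"
    then obtain R where R: "\<And>t. 0 \<le> t \<Longrightarrow> (\<And>\<tau>. \<tau> \<in> {0..t} \<Longrightarrow> (w has_vector_derivative - G (w \<tau>)) (at \<tau>)) \<Longrightarrow>
        norm (w t) \<le> R"
      using train_loss_gradient_flow_bounded[OF arch pidx grad] by metis
    have bound: "norm (w t) \<le> R" if "t \<in> I" "0 \<le> t" for t
      using R[OF that(2) ode_solution_on_segment[OF sol that(1)]] .
    show complete: "{0..} \<subseteq> I"
      using maximal_ode_solution_forward_complete[OF lip max] bound by blast
    show "bounded (w ` {0..})"
      using bound complete unfolding bounded_iff by auto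
    interpret gradient_flow ?L G w
      using grad G' complete sol by unfold_locales
        (auto simp: ode_solution_def intro: has_derivative_continuous continuous_at_imp_continuous_on)
    show "\<exists>z. G z = 0 \<and> (w \<longlongrightarrow> z) at_top"
      using bounded_flow_converges_to_critical_point \<open>bounded (w ` {0..})\<close> loj by blast
  qed
qed

end
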